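(* Let $\mathbb{E}$ be a Euclidean space and let $\mathcal{X},\mathcal{Y}\subset\mathbb{E}$ be sets that are both $C^{(2)}$-manifolds around a point $z\in\mathcal{X}\cap\mathcal{Y}$. Suppose $z$ is an isolated point of $\mathcal{X}\cap\mathcal{Y}$ and that $\mathcal{X}$ and $\mathcal{Y}$ intersect transversally at $z$, i.e. $N_{\mathcal{X}}(z)\cap N_{\mathcal{Y}}(z)=\{0\}$. Then there exists an open neighborhood $W$ of $z$ such that, for every point $x\in\mathcal{X}\cap W$, the affine set $x+T_{\mathcal{X}}(x)$ intersects the set $\mathcal{Y}\cap W$ at a unique point $y(x)$, and moreover $$|y(x)-z| = O(|x-z|^2)\quad\text{as } x\to z \ (x\in\mathcal{X}).$$
   Context: A set $\mathcal{X}\subset\mathbb{E}$ is a $C^{(r)}$-manifold around $z\in\mathcal{X}$ if there is a $C^{(r)}$-smooth map $F\colon\mathbb{E}\to\mathbb{R}^m$ with surjective derivative $DF(z)$ such that $F^{-1}(0)$ is a neighborhood of $z$ in $\mathcal{X}$; equivalently there is an open neighborhood $U$ of $0$ in $\mathbb{R}^k$ and a $C^{(r)}$-smooth map $G\colon U\to\mathbb{E}$ with $G(0)=z$, everywhere injective derivative, and $G(U)$ a neighborhood of $z$ in $\mathcal{X}$. The tangent space is $T_{\mathcal{X}}(z)=\mathrm{Null}(DF(z))=\mathrm{Range}(DG(0))$ and the normal space is $N_{\mathcal{X}}(z)=\mathrm{Range}(DF(z)^* )=\mathrm{Null}(DG(0)^* )$, its orthogonal complement; the same definitions apply at points of $\mathcal{X}$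 near $z$. *)

theory Defs
  imports "HOL-Analysis.Analysis"
begin

definition C2_fun :: "('a::euclidean_space \<Rightarrow> real) \<Rightarrow> bool" where
  "C2_fun f \<longleftrightarrow> (\<exists>g H. (\<forall>x. (f has_derivative (\<lambda>v. g x \<bullet> v)) (at x)) \<and>
      (\<forall>x. (g has_derivative blinfun_apply (H x)) (at x)) \<and> continuous_on UNIV H)"

definition local_defining_map ::
    "'a::euclidean_space set \<Rightarrow> 'a \<Rightarrow> nat \<Rightarrow> (nat \<Rightarrow> 'a \<Rightarrow> real) \<Rightarrow> bool" where
  "local_defining_map X x m F \<longleftrightarrow>
     (\<forall>i<m. C2_fun (F i)) \<and>
     (\<forall>c::nat \<Rightarrow> real. \<exists>v. \<forall>i<m. frechet_derivative (F i) (at x) v = c i) \<and>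
     {y. \<forall>i<m. F i y = 0} \<subseteq> X \<and>
     (\<exists>U. open U \<and> x \<in> U \<and> X \<inter> U \<subseteq> {y. \<forall>i<m. F i y = 0})"

definition C2_manifold_around :: "'a::euclidean_space set \<Rightarrow> 'a \<Rightarrow> bool" where
  "C2_manifold_around X z \<longleftrightarrow> z \<in> X \<and> (\<exists>m F. local_defining_map X z m F)"

definition tangent_space :: "'a::euclidean_space set \<Rightarrow> 'a \<Rightarrow> 'a set" where
  "tangent_space X x =
     (let p = (SOME p. local_defining_map X x (fst p) (snd p)) in
       {v. \<forall>i<fst p. frechet_derivative (snd p i) (at x) v = 0})"

text \<open>Normal space N_X(x) = Range(DF(x)^*): w = DF(x)^* c iff w \<bullet> v = c \<bullet> DF(x) v for all v.\<close>
definition normal_space :: "'a::euclidean_space set \<Rightarrow> 'a \<Rightarrow> 'a set" where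
  "normal_space X x =
     (let p = (SOME p. local_defining_map X x (fst p) (snd p)) in
       {w. \<exists>c::nat \<Rightarrow> real. \<forall>v. w \<bullet> v = (\<Sum>i<fst p. c i * frechet_derivative (snd p i) (at x) v)})"

end

(* Near z write X and Y as common zero sets of C^2 functions F i and G j, with gradients a i and
   b j at z. Transversality makes the a i and b j linearly independent; isolation of z in the
   intersection makes them span, because by Lyusternik's theorem every direction annihilated by
   all of them is tangent to the common zero set. For x in X near z the affine plane x + T_X(x) is
   {y. grad F i x . (y - x) = 0}, a perturbation of the plane {y. a i . (y - z) = 0}: the normals
   move by O(|x - z|) and the offsets grad F i x . (x - z) are O(|x - z|^2), since F i vanishes at
   both x and z. Intersecting it with Y is thus a nearly linear system whose linear part is
   inverted by the biorthogonal system of the basis (a, b); Brouwer's fixed point theorem gives a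
   solution within O(|x - z|^2) of z, and the near-linearity makes it unique. *)

theory Submission
  imports Defs
begin

section \<open>Biorthogonal systems\<close>

lemma ball_Plus_iff: "(\<forall>l\<in>A <+> B. P l) \<longleftrightarrow> (\<forall>a\<in>A. P (Inl a)) \<and> (\<forall>b\<in>B. P (Inr b))"
  by (auto elim: PlusE)

lemma norm_sum_scaleR_le:
  fixes u :: "'i \<Rightarrow> 'a::real_normed_vector"
  assumes "\<And>i. i \<in> I \<Longrightarrow> \<bar>c i\<bar> \<le> B"
  shows "norm (\<Sum>i\<in>I. c i *\<^sub>R u i) \<le> B * (\<Sum>i\<in>I. norm (u i))"
proof -
  have "norm (\<Sum>i\<in>I. c i *\<^sub>R u i) \<le> (\<Sum>i\<in>I. \<bar>c i\<bar> * norm (u i))"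
    by (rule order_trans[OF norm_sum]) simp
  also have "\<dots> \<le> (\<Sum>i\<in>I. B * norm (u i))"
    by (rule sum_mono) (simp add: assms mult_right_mono)
  finally show ?thesis
    by (simp add: sum_distrib_left)
qed

lemma inner_sum_biorthogonal:
  fixes e u :: "'i \<Rightarrow> 'a::real_inner"
  assumes "finite N" "\<forall>l\<in>N. \<forall>l'\<in>N. e l \<bullet> u l' = (if l = l' then 1 else 0)" "l \<in> N"
  shows "e l \<bullet> (\<Sum>l'\<in>N. c l' *\<^sub>R u l') = c l"
proof -
  have "e l \<bullet> (\<Sum>l'\<in>N. c l' *\<^sub>R u l') = (\<Sum>l'\<in>N. if l = l' then c l' else 0)"
    unfolding inner_sum_right by (rule sum.cong) (use assms in auto)
  also have "\<dots> = c l"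
    using assms by simp
  finally show ?thesis .
qed

lemma biorthogonal_expansion:
  fixes e u :: "'i \<Rightarrow> 'a::real_inner"
  assumes "finite N"
    and biorth: "\<forall>l\<in>N. \<forall>l'\<in>N. e l \<bullet> u l' = (if l = l' then 1 else 0)"
    and span: "\<forall>h. (\<forall>l\<in>N. e l \<bullet> h = 0) \<longrightarrow> h = 0"
  shows "h = (\<Sum>l\<in>N. (e l \<bullet> h) *\<^sub>R u l)"
proof -
  have "\<forall>l\<in>N. e l \<bullet> (h - (\<Sum>l'\<in>N. (e l' \<bullet> h) *\<^sub>R u l')) = 0"
    using inner_sum_biorthogonal[OF assms(1,2)] by (simp add: inner_diff_right)
  then show ?thesis
    using span by force
qed

lemma inner_surjective_imp_biorthogonal:
  fixes a :: "'i \<Rightarrow> 'a::real_inner"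
  assumes "\<forall>c. \<exists>w. \<forall>i\<in>I. a i \<bullet> w = c i"
  obtains u where "\<forall>i\<in>I. \<forall>j\<in>I. a i \<bullet> u j = (if i = j then 1 else 0)"
proof -
  have "\<exists>w. \<forall>i\<in>I. a i \<bullet> w = (if i = j then 1 else 0)" for j
    using spec[OF assms, of "\<lambda>i. if i = j then 1 else 0"] by simp
  then show ?thesis
    using that by metis
qed

lemma inner_surjective_imp_independent:
  fixes a :: "'i \<Rightarrow> 'a::real_inner"
  assumes "finite I" "\<forall>c. \<exists>w. \<forall>i\<in>I. a i \<bullet> w = c i"
    and "(\<Sum>i\<in>I. c i *\<^sub>R a i) = 0" "i \<in> I"
  shows "c i = 0"
proof -
  obtain w where w: "\<forall>i\<in>I. a i \<bullet> w = c i"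
    using assms(2) by blast
  have "(\<Sum>i\<in>I. c i * c i) = (\<Sum>i\<in>I. c i *\<^sub>R a i) \<bullet> w"
    by (simp add: inner_sum_left w)
  then have "(\<Sum>i\<in>I. c i * c i) = 0"
    using assms(3) by simp
  then show ?thesis
    using assms(1,4) sum_nonneg_eq_0_iff[of I "\<lambda>i. c i * c i"] by simp
qed

text \<open>The Gram map \<open>h \<mapsto> \<Sum>\<^sub>i (a\<^sub>i \<bullet> h) a\<^sub>i\<close> is injective on the span of the \<open>a\<^sub>i\<close>, hence onto it.\<close>
lemma independent_imp_inner_surjective:
  fixes a :: "'i \<Rightarrow> 'a::euclidean_space"
  assumes "finite I" and indep: "\<forall>c. (\<Sum>i\<in>I. c i *\<^sub>R a i) = 0 \<longrightarrow> (\<forall>i\<in>I. c i = 0)"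
  shows "\<exists>w. \<forall>i\<in>I. a i \<bullet> w = c i"
proof -
  define T where "T h = (\<Sum>i\<in>I. (a i \<bullet> h) *\<^sub>R a i)" for h
  define V where "V = span (a ` I)"
  have lin: "linear T"
    by (rule linearI) (simp_all add: T_def inner_add_right scaleR_add_left sum.distrib scaleR_sum_right)
  have into: "T h \<in> V" for h
    unfolding T_def V_def by (intro span_sum span_scale span_base) auto
  have "inj_on T V"
    unfolding linear_inj_on_iff_eq_0[OF lin subspace_span[of "a ` I", folded V_def]]
  proof (intro ballI impI)
    fix h assume "h \<in> V" "T h = 0"
    have "(\<Sum>i\<in>I. (a i \<bullet> h)\<^sup>2) = h \<bullet> T h"
      by (simp add: T_def inner_sum_right power2_eq_square inner_commute)
    then have "\<forall>i\<in>I. (a i \<bullet> h)\<^sup>2 = 0"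
      using \<open>T h = 0\<close> sum_nonneg_eq_0_iff[OF assms(1), of "\<lambda>i. (a i \<bullet> h)\<^sup>2"] by simp
    then have "orthogonal h h"
      using \<open>h \<in> V\<close> unfolding V_def
      by (intro orthogonal_to_span[of h "a ` I"]) (auto simp: orthogonal_def inner_commute)
    then show "h = 0"
      by (simp add: orthogonal_def)
  qed
  then have "dim (T ` V) = dim V"
    using dim_image_eq[OF lin, of V] by (simp add: V_def span_span)
  then have "T ` V = V"
    using into lin by (intro subspace_dim_equal) (auto simp: V_def linear_subspace_image)
  moreover have "(\<Sum>i\<in>I. c i *\<^sub>R a i) \<in> V"
    unfolding V_def by (intro span_sum span_scale span_base) auto
  ultimately obtain h where "T h = (\<Sum>i\<in>I. c i *\<^sub>R a i)"
    by (metis imageE)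
  then have "(\<Sum>i\<in>I. (a i \<bullet> h - c i) *\<^sub>R a i) = 0"
    by (simp add: T_def scaleR_diff_left sum_subtractf)
  then have "\<forall>i\<in>I. a i \<bullet> h - c i = 0"
    using indep[rule_format, of "\<lambda>i. a i \<bullet> h - c i"] by blast
  then show ?thesis
    by auto
qed

lemma inner_surjective_perturb:
  fixes a :: "'i \<Rightarrow> 'a::euclidean_space"
  assumes "finite I" and surj: "\<forall>c. \<exists>w. \<forall>i\<in>I. a i \<bullet> w = c i"
  obtains \<eta> where "\<eta> > 0"
    "\<And>a'. \<forall>i\<in>I. norm (a' i - a i) \<le> \<eta> \<Longrightarrow> \<forall>c. \<exists>w. \<forall>i\<in>I. a' i \<bullet> w = c i"
proof -
  obtain u where u: "\<forall>i\<in>I. \<forall>j\<in>I. a i \<bullet> u j = (if i = j then 1 else 0)"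
    using inner_surjective_imp_biorthogonal[OF surj] .
  define U where "U = (\<Sum>i\<in>I. norm (u i))"
  define \<eta> where "\<eta> = 1 / (2 * (U + 1))"
  have "U \<ge> 0"
    by (simp add: U_def sum_nonneg)
  then have "\<eta> > 0" "\<eta> * U \<le> 1 / 2"
    by (simp_all add: \<eta>_def field_simps)
  moreover have "\<exists>w. \<forall>i\<in>I. a' i \<bullet> w = c i" if a': "\<forall>i\<in>I. norm (a' i - a i) \<le> \<eta>" for a' c
  proof -
    text \<open>\<open>T\<close> is a small perturbation of the identity with \<open>a j \<bullet> T h = a' j \<bullet> h\<close>.\<close>
    define T where "T h = h + (\<Sum>i\<in>I. ((a' i - a i) \<bullet> h) *\<^sub>R u i)" for h
    have lin: "linear T"
      by (rule linearI)
        (simp_all add: T_def inner_add_right scaleR_add_left sum.distrib scaleR_sum_right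
          scaleR_add_right add_ac)
    have "h = 0" if "T h = 0" for h
    proof -
      have "\<bar>(a' i - a i) \<bullet> h\<bar> \<le> \<eta> * norm h" if "i \<in> I" for i
        using Cauchy_Schwarz_ineq2[of "a' i - a i" h] a' that \<open>\<eta> > 0\<close>
        by (meson mult_right_mono norm_ge_zero order_trans)
      then have "norm (T h - h) \<le> \<eta> * norm h * U"
        unfolding T_def U_def by (simp add: norm_sum_scaleR_le)
      also have "\<dots> = norm h * (\<eta> * U)"
        by simp
      also have "\<dots> \<le> norm h * (1 / 2)"
        using \<open>\<eta> * U \<le> 1 / 2\<close> by (intro mult_left_mono) simp_all
      finally show "h = 0"
        using that by simp
    qed
    then obtain h where h: "T h = (\<Sum>i\<in>I. c i *\<^sub>R u i)"
      using linear_injective_imp_surjective[OF lin] lin linear_injective_0 by (metis surjD)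
    have "a' j \<bullet> h = c j" if "j \<in> I" for j
    proof -
      have "a j \<bullet> T h = a j \<bullet> h + (a' j - a j) \<bullet> h"
        unfolding T_def inner_add_right by (subst inner_sum_biorthogonal[OF assms(1) u that]) (rule refl)
      then have "a j \<bullet> T h = a' j \<bullet> h"
        by (simp add: inner_diff_left)
      then show ?thesis
        using inner_sum_biorthogonal[OF assms(1) u that] h by simp
    qed
    then show ?thesis
      by blast
  qed
  ultimately show ?thesis
    using that by blast
qed

lemma transversal_imp_inner_surjective:
  fixes a :: "'i \<Rightarrow> 'a::euclidean_space" and b :: "'j \<Rightarrow> 'a"
  assumes "finite I" "finite J"
    and surj_a: "\<forall>c. \<exists>w. \<forall>i\<in>I. a i \<bullet> w = c i" and surj_b: "\<forall>d. \<exists>w. \<forall>j\<in>J. b j \<bullet> w = d j"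
    and transversal: "\<forall>c d. (\<Sum>i\<in>I. c i *\<^sub>R a i) = (\<Sum>j\<in>J. d j *\<^sub>R b j) \<longrightarrow> (\<Sum>i\<in>I. c i *\<^sub>R a i) = 0"
  shows "\<forall>c. \<exists>w. \<forall>l\<in>I <+> J. case_sum a b l \<bullet> w = c l"
proof -
  have "\<forall>c. (\<Sum>l\<in>I <+> J. c l *\<^sub>R case_sum a b l) = 0 \<longrightarrow> (\<forall>l\<in>I <+> J. c l = 0)"
  proof (intro allI impI)
    fix c assume "(\<Sum>l\<in>I <+> J. c l *\<^sub>R case_sum a b l) = 0"
    then have sum0: "(\<Sum>i\<in>I. c (Inl i) *\<^sub>R a i) + (\<Sum>j\<in>J. c (Inr j) *\<^sub>R b j) = 0"
      by (simp add: sum.Plus assms(1,2) o_def)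
    then have "(\<Sum>i\<in>I. c (Inl i) *\<^sub>R a i) = (\<Sum>j\<in>J. (- c (Inr j)) *\<^sub>R b j)"
      by (simp add: sum_negf eq_neg_iff_add_eq_0)
    then have a0: "(\<Sum>i\<in>I. c (Inl i) *\<^sub>R a i) = 0"
      using transversal[rule_format, of "\<lambda>i. c (Inl i)" "\<lambda>j. - c (Inr j)"] by simp
    then have b0: "(\<Sum>j\<in>J. c (Inr j) *\<^sub>R b j) = 0"
      using sum0 by simp
    show "\<forall>l\<in>I <+> J. c l = 0"
      using inner_surjective_imp_independent[OF assms(1) surj_a a0]
        inner_surjective_imp_independent[OF assms(2) surj_b b0]
      by (auto elim: PlusE)
  qed
  then show ?thesis
    using independent_imp_inner_surjective[OF finite_Plus[OF assms(1,2)]] by blast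
qed

section \<open>Gradient estimates\<close>

lemma gradient_mean_value_bound:
  fixes f :: "'a::euclidean_space \<Rightarrow> real"
  assumes "convex S" and deriv: "\<And>u. u \<in> S \<Longrightarrow> (f has_derivative (\<lambda>v. g u \<bullet> v)) (at u within S)"
    and bound: "\<And>u. u \<in> S \<Longrightarrow> norm (g u - c) \<le> B" and "x \<in> S" "y \<in> S"
  shows "\<bar>f y - f x - c \<bullet> (y - x)\<bar> \<le> B * norm (y - x)"
proof -
  have "norm ((f y - c \<bullet> y) - (f x - c \<bullet> x)) \<le> B * norm (y - x)"
  proof (rule differentiable_bound[OF \<open>convex S\<close> _ _ \<open>y \<in> S\<close> \<open>x \<in> S\<close>])
    show "((\<lambda>u. f u - c \<bullet> u) has_derivative (\<lambda>v. (g u - c) \<bullet> v)) (at u within S)" if "u \<in> S" for u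
      using deriv[OF that] by (auto intro!: derivative_eq_intros simp: inner_diff_left)
    show "onorm (\<lambda>v. (g u - c) \<bullet> v) \<le> B" if "u \<in> S" for u
    proof (rule onorm_le)
      fix v
      have "\<bar>(g u - c) \<bullet> v\<bar> \<le> norm (g u - c) * norm v"
        by (rule Cauchy_Schwarz_ineq2)
      also have "\<dots> \<le> B * norm v"
        using bound[OF that] by (simp add: mult_right_mono)
      finally show "norm ((g u - c) \<bullet> v) \<le> B * norm v"
        by simp
    qed
  qed
  then show ?thesis
    by (simp add: inner_diff_right algebra_simps)
qed

lemma lipschitz_gradient_taylor_bound:
  fixes f :: "'a::euclidean_space \<Rightarrow> real"
  assumes "convex S" and deriv: "\<And>u. u \<in> S \<Longrightarrow> (f has_derivative (\<lambda>v. g u \<bullet> v)) (at u within S)"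
    and lip: "K-lipschitz_on S g" and "x \<in> S" "y \<in> S"
  shows "\<bar>f y - f x - g x \<bullet> (y - x)\<bar> \<le> K * (norm (y - x))\<^sup>2"
proof -
  have seg: "closed_segment x y \<subseteq> S"
    using assms by (simp add: closed_segment_subset)
  have "norm (g u - g x) \<le> K * norm (y - x)" if "u \<in> closed_segment x y" for u
  proof -
    have "norm (g u - g x) \<le> K * norm (u - x)"
      using lipschitz_onD[OF lip] seg that \<open>x \<in> S\<close> by (simp add: dist_norm subset_iff)
    also have "\<dots> \<le> K * norm (y - x)"
      using segment_bound1[OF that] lipschitz_on_nonneg[OF lip] by (intro mult_left_mono) auto
    finally show ?thesis .
  qed
  then have "\<bar>f y - f x - g x \<bullet> (y - x)\<bar> \<le> K * norm (y - x) * norm (y - x)"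
    using seg \<open>x \<in> S\<close> \<open>y \<in> S\<close>
    by (intro gradient_mean_value_bound[of "closed_segment x y" f g])
      (auto intro: has_derivative_subset[OF deriv])
  then show ?thesis
    by (simp add: power2_eq_square mult.assoc)
qed

lemma lipschitz_gradient_strict_bound:
  fixes f :: "'a::euclidean_space \<Rightarrow> real"
  assumes deriv: "\<And>u. (f has_derivative (\<lambda>v. g u \<bullet> v)) (at u)"
    and lip: "K-lipschitz_on (cball z \<rho>) g" and "y \<in> cball z \<rho>" "y' \<in> cball z \<rho>"
  shows "\<bar>f y - f y' - g z \<bullet> (y - y')\<bar> \<le> K * \<rho> * norm (y - y')"
proof (rule gradient_mean_value_bound[OF convex_cball _ _ assms(4,3)])
  show "(f has_derivative (\<lambda>v. g u \<bullet> v)) (at u within cball z \<rho>)" for u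
    using deriv by (rule has_derivative_at_withinI)
  have "z \<in> cball z \<rho>"
    using assms(3) by (auto intro: order_trans[OF zero_le_dist])
  show "norm (g u - g z) \<le> K * \<rho>" if "u \<in> cball z \<rho>" for u
  proof -
    have "norm (g u - g z) \<le> K * dist u z"
      using lipschitz_onD[OF lip that \<open>z \<in> cball z \<rho>\<close>] by (simp add: dist_norm)
    also have "\<dots> \<le> K * \<rho>"
      using that lipschitz_on_nonneg[OF lip] by (intro mult_left_mono) (simp_all add: dist_commute)
    finally show ?thesis .
  qed
qed

text \<open>The gradient at a zero \<open>x\<close> is nearly orthogonal to the chord towards another zero \<open>z\<close>; this is
  where the quadratic rate of the theorem comes from.\<close>
lemma lipschitz_gradient_chord_bound:
  fixes f :: "'a::euclidean_space \<Rightarrow> real"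
  assumes deriv: "\<And>u. (f has_derivative (\<lambda>v. g u \<bullet> v)) (at u)"
    and lip: "K-lipschitz_on (cball z \<rho>) g" and "x \<in> cball z \<rho>" "f x = 0" "f z = 0"
  shows "\<bar>g x \<bullet> (x - z)\<bar> \<le> K * (norm (x - z))\<^sup>2"
proof -
  have "z \<in> cball z \<rho>"
    using \<open>x \<in> cball z \<rho>\<close> by (auto intro: order_trans[OF zero_le_dist])
  then have "\<bar>f z - f x - g x \<bullet> (z - x)\<bar> \<le> K * (norm (z - x))\<^sup>2"
    using deriv \<open>x \<in> cball z \<rho>\<close>
    by (intro lipschitz_gradient_taylor_bound[OF convex_cball _ lip]) (auto intro: has_derivative_at_withinI)
  then show ?thesis
    using \<open>f x = 0\<close> \<open>f z = 0\<close> by (simp add: norm_minus_commute inner_diff_right)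
qed

lemma C2_fun_gradient:
  fixes f :: "'a::euclidean_space \<Rightarrow> real"
  assumes "C2_fun f"
  obtains g where "\<And>x. (f has_derivative (\<lambda>v. g x \<bullet> v)) (at x)" "continuous_on UNIV g"
    "\<And>z. \<exists>\<rho>>0. \<exists>K. K-lipschitz_on (cball z \<rho>) g"
proof -
  obtain g H where df: "\<And>x. (f has_derivative (\<lambda>v. g x \<bullet> v)) (at x)"
    and dg: "\<And>x. (g has_derivative blinfun_apply (H x)) (at x)" and "continuous_on UNIV H"
    using assms unfolding C2_fun_def by blast
  have "\<exists>\<rho>>0. \<exists>K. K-lipschitz_on (cball z \<rho>) g" for z
  proof -
    obtain \<rho> where "\<rho> > 0" and \<rho>: "\<And>u. dist u z < \<rho> \<Longrightarrow> dist (H u) (H z) < 1"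
      using \<open>continuous_on UNIV H\<close> unfolding continuous_on_iff by (meson UNIV_I zero_less_one)
    have "(norm (H z) + 1)-lipschitz_on (cball z (\<rho> / 2)) g"
    proof (rule lipschitz_onI)
      fix x y assume "x \<in> cball z (\<rho> / 2)" "y \<in> cball z (\<rho> / 2)"
      moreover have "onorm (blinfun_apply (H u)) \<le> norm (H z) + 1" if "u \<in> cball z (\<rho> / 2)" for u
      proof -
        have "dist (H u) (H z) < 1"
          using that \<open>\<rho> > 0\<close> by (intro \<rho>) (simp add: dist_commute)
        then show ?thesis
          using norm_triangle_sub[of "H u" "H z"] by (simp add: norm_blinfun.rep_eq[symmetric] dist_norm)
      qed
      ultimately show "dist (g x) (g y) \<le> (norm (H z) + 1) * dist x y"
        using differentiable_bound[of "cball z (\<rho> / 2)" g "\<lambda>u. blinfun_apply (H u)"]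
        by (simp add: dist_norm has_derivative_at_withinI dg)
    qed simp
    then show ?thesis
      using \<open>\<rho> > 0\<close> by (intro exI[of _ "\<rho> / 2"]) auto
  qed
  moreover have "continuous_on UNIV g"
    using dg has_derivative_continuous continuous_at_imp_continuous_on by blast
  ultimately show ?thesis
    using that df by blast
qed

lemma lipschitz_on_cball_uniform:
  assumes "finite I" "\<forall>i\<in>I. \<exists>\<rho>>0. \<exists>K. K-lipschitz_on (cball z \<rho>) (g i)"
  obtains \<rho> K where "\<rho> > 0" "K \<ge> 0" "\<forall>i\<in>I. K-lipschitz_on (cball z \<rho>) (g i)"
proof -
  obtain \<rho>' K' where \<rho>': "\<forall>i\<in>I. \<rho>' i > 0 \<and> (K' i)-lipschitz_on (cball z (\<rho>' i)) (g i)"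
    using assms(2) by metis
  define \<rho> where "\<rho> = Min (insert 1 (\<rho>' ` I))"
  define K where "K = Max (insert 0 (K' ` I))"
  have "\<rho> > 0" "K \<ge> 0"
    using \<rho>' assms(1) by (simp_all add: \<rho>_def K_def)
  moreover have "K-lipschitz_on (cball z \<rho>) (g i)" if "i \<in> I" for i
  proof (rule lipschitz_on_le[OF lipschitz_on_subset])
    show "(K' i)-lipschitz_on (cball z (\<rho>' i)) (g i)"
      using \<rho>' that by blast
    show "cball z \<rho> \<subseteq> cball z (\<rho>' i)"
      using that assms(1) by (intro subset_cball) (simp add: \<rho>_def)
    show "K' i \<le> K"
      using that assms(1) by (simp add: K_def)
  qed
  ultimately show ?thesis
    using that by blast
qed

lemma has_derivative_finite_uniform:
  fixes F :: "'i \<Rightarrow> 'a::real_normed_vector \<Rightarrow> 'b::real_normed_vector"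
  assumes "finite I" "\<forall>i\<in>I. (F i has_derivative F' i) (at x)" "\<eta> > 0"
  obtains \<delta> where "\<delta> > 0"
    "\<And>i y. i \<in> I \<Longrightarrow> norm (y - x) < \<delta> \<Longrightarrow> norm (F i y - F i x - F' i (y - x)) \<le> \<eta> * norm (y - x)"
proof -
  have "\<forall>i\<in>I. \<forall>\<^sub>F y in nhds x. norm (F i y - F i x - F' i (y - x)) \<le> \<eta> * norm (y - x)"
    using assms(2,3) unfolding has_derivative_at_alt eventually_nhds_metric dist_norm by blast
  then have "\<forall>\<^sub>F y in nhds x. \<forall>i\<in>I. norm (F i y - F i x - F' i (y - x)) \<le> \<eta> * norm (y - x)"
    by (rule eventually_ball_finite[OF assms(1)])
  then show ?thesis
    using that unfolding eventually_nhds_metric dist_norm by blast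
qed

section \<open>Zeros of nearly linear maps\<close>

text \<open>Brouwer's theorem for the simplified Newton map \<open>y \<mapsto> c + (\<Sum>l. (e l \<bullet> (y - c) - \<Phi> l y) u l)\<close>, in
  which the biorthogonal vectors \<open>u\<close> replace the inverse of the derivative \<open>h \<mapsto> (e l \<bullet> h)\<^sub>l\<close>.\<close>
lemma biorthogonal_newton_zero:
  fixes \<Phi> :: "'i \<Rightarrow> 'a::euclidean_space \<Rightarrow> real" and e u :: "'i \<Rightarrow> 'a"
  assumes "finite N"
    and biorth: "\<forall>l\<in>N. \<forall>l'\<in>N. e l \<bullet> u l' = (if l = l' then 1 else 0)"
    and cont: "\<forall>l\<in>N. continuous_on (cball c r) (\<Phi> l)" and "0 \<le> r"
    and residual: "\<And>y. y \<in> cball c r \<Longrightarrow> norm (\<Sum>l\<in>N. (e l \<bullet> (y - c) - \<Phi> l y) *\<^sub>R u l) \<le> r"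
  obtains y where "y \<in> cball c r" "\<forall>l\<in>N. \<Phi> l y = 0"
proof -
  define f where "f y = c + (\<Sum>l\<in>N. (e l \<bullet> (y - c) - \<Phi> l y) *\<^sub>R u l)" for y
  have maps: "f \<in> cball c r \<rightarrow> cball c r"
  proof
    fix y assume "y \<in> cball c r"
    then show "f y \<in> cball c r"
      using residual by (simp add: f_def dist_norm)
  qed
  have "continuous_on (cball c r) f"
    unfolding f_def using cont by (intro continuous_intros) auto
  moreover have "cball c r \<noteq> {}"
    using \<open>0 \<le> r\<close> by simp
  ultimately obtain y where y: "y \<in> cball c r" "f y = y"
    using brouwer[OF compact_cball convex_cball _ _ maps] by blast
  have "\<Phi> l y = 0" if "l \<in> N" for l
  proof -
    have "y - c = (\<Sum>l\<in>N. (e l \<bullet> (y - c) - \<Phi> l y) *\<^sub>R u l)"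
      using y(2) unfolding f_def by (metis add_diff_cancel_left')
    then have "e l \<bullet> (y - c) = e l \<bullet> (y - c) - \<Phi> l y"
      using inner_sum_biorthogonal[OF assms(1) biorth that] by metis
    then show ?thesis
      by simp
  qed
  then show ?thesis
    using that y(1) by blast
qed

lemma almost_linear_zero_unique:
  fixes \<Phi> :: "'i \<Rightarrow> 'a::euclidean_space \<Rightarrow> real" and e u :: "'i \<Rightarrow> 'a" and N :: "'i set"
  defines "U \<equiv> \<Sum>l\<in>N. norm (u l)"
  assumes "finite N"
    and biorth: "\<forall>l\<in>N. \<forall>l'\<in>N. e l \<bullet> u l' = (if l = l' then 1 else 0)"
    and span: "\<forall>h. (\<forall>l\<in>N. e l \<bullet> h = 0) \<longrightarrow> h = 0"
    and approx: "\<forall>l\<in>N. \<forall>y\<in>S. \<forall>y'\<in>S. \<bar>\<Phi> l y - \<Phi> l y' - e l \<bullet> (y - y')\<bar> \<le> \<eta> * norm (y - y')"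
    and "\<eta> * U < 1"
    and "y \<in> S" "y' \<in> S" "\<forall>l\<in>N. \<Phi> l y = 0" "\<forall>l\<in>N. \<Phi> l y' = 0"
  shows "y = y'"
proof -
  have "y - y' = (\<Sum>l\<in>N. (e l \<bullet> (y - y') - (\<Phi> l y - \<Phi> l y')) *\<^sub>R u l)"
    using biorthogonal_expansion[OF assms(2) biorth span, of "y - y'"] assms(9,10) by simp
  also have "norm \<dots> \<le> \<eta> * norm (y - y') * U"
    unfolding U_def using approx assms(7,8)
    by (intro norm_sum_scaleR_le) (simp add: abs_minus_commute)
  finally have "norm (y - y') * (1 - \<eta> * U) \<le> 0"
    by (simp add: algebra_simps)
  then show ?thesis
    using \<open>\<eta> * U < 1\<close> by (simp add: mult_le_0_iff)
qed

lemma almost_linear_zero_exists: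
  fixes \<Phi> :: "'i \<Rightarrow> 'a::euclidean_space \<Rightarrow> real" and e u :: "'i \<Rightarrow> 'a" and N :: "'i set"
  defines "U \<equiv> \<Sum>l\<in>N. norm (u l)"
  assumes "finite N"
    and biorth: "\<forall>l\<in>N. \<forall>l'\<in>N. e l \<bullet> u l' = (if l = l' then 1 else 0)"
    and cont: "\<forall>l\<in>N. continuous_on (cball z (2 * U * \<sigma>)) (\<Phi> l)"
    and approx: "\<forall>l\<in>N. \<forall>y\<in>cball z (2 * U * \<sigma>). \<bar>\<Phi> l y - \<Phi> l z - e l \<bullet> (y - z)\<bar> \<le> \<eta> * norm (y - z)"
    and "0 \<le> \<eta>" "\<eta> * U \<le> 1 / 2" "0 \<le> \<sigma>" and small: "\<forall>l\<in>N. \<bar>\<Phi> l z\<bar> \<le> \<sigma>"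
  obtains y where "y \<in> cball z (2 * U * \<sigma>)" "\<forall>l\<in>N. \<Phi> l y = 0"
proof (rule biorthogonal_newton_zero[OF assms(2) biorth cont])
  have "U \<ge> 0"
    by (simp add: U_def sum_nonneg)
  then show "0 \<le> 2 * U * \<sigma>"
    using \<open>0 \<le> \<sigma>\<close> by simp
  fix y assume y: "y \<in> cball z (2 * U * \<sigma>)"
  have "\<bar>e l \<bullet> (y - z) - \<Phi> l y\<bar> \<le> \<sigma> + \<eta> * (2 * U * \<sigma>)" if "l \<in> N" for l
  proof -
    have "\<bar>e l \<bullet> (y - z) - \<Phi> l y\<bar> \<le> \<bar>\<Phi> l z\<bar> + \<bar>\<Phi> l y - \<Phi> l z - e l \<bullet> (y - z)\<bar>"
      by linarith
    also have "\<dots> \<le> \<sigma> + \<eta> * norm (y - z)"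
      using small approx that y by (intro add_mono) auto
    also have "\<dots> \<le> \<sigma> + \<eta> * (2 * U * \<sigma>)"
      using y \<open>0 \<le> \<eta>\<close> by (intro add_left_mono mult_left_mono) (auto simp: dist_norm norm_minus_commute)
    finally show ?thesis .
  qed
  then have "norm (\<Sum>l\<in>N. (e l \<bullet> (y - z) - \<Phi> l y) *\<^sub>R u l) \<le> (\<sigma> + \<eta> * (2 * U * \<sigma>)) * U"
    unfolding U_def by (simp add: norm_sum_scaleR_le)
  also have "\<dots> = U * \<sigma> + 2 * (\<eta> * U) * (U * \<sigma>)"
    by (simp add: algebra_simps)
  also have "\<dots> \<le> 2 * U * \<sigma>"
    using mult_right_mono[OF \<open>\<eta> * U \<le> 1 / 2\<close>, of "U * \<sigma>"] \<open>U \<ge> 0\<close> \<open>0 \<le> \<sigma>\<close> by simp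
  finally show "norm (\<Sum>l\<in>N. (e l \<bullet> (y - z) - \<Phi> l y) *\<^sub>R u l) \<le> 2 * U * \<sigma>" .
qed (use that in blast)

section \<open>Tangent cones of zero sets\<close>

definition tangent_cone :: "'a::real_normed_vector set \<Rightarrow> 'a \<Rightarrow> 'a set" where
  "tangent_cone S x = {v. \<forall>\<epsilon>>0. \<exists>t y. 0 < t \<and> t \<le> \<epsilon> \<and> y \<in> S \<and> norm (y - x - t *\<^sub>R v) \<le> \<epsilon> * t}"

lemma tangent_coneE:
  assumes "v \<in> tangent_cone S x" "0 < \<epsilon>" "\<epsilon> \<le> 1"
  obtains t y where "0 < t" "t \<le> \<epsilon>" "y \<in> S" "norm (y - x - t *\<^sub>R v) \<le> \<epsilon> * t"
    "norm (y - x) \<le> t * (norm v + 1)"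
proof -
  obtain t y where t: "0 < t" "t \<le> \<epsilon>" "y \<in> S" "norm (y - x - t *\<^sub>R v) \<le> \<epsilon> * t"
    using assms(1,2) unfolding tangent_cone_def by blast
  have "norm (y - x) \<le> \<epsilon> * t + t * norm v"
    using t(1,4) norm_triangle_sub[of "y - x" "t *\<^sub>R v"] by simp
  also have "\<dots> \<le> t * (norm v + 1)"
    using t(1) \<open>\<epsilon> \<le> 1\<close> by (simp add: algebra_simps)
  finally show ?thesis
    using that t by blast
qed

lemma zero_near_ray:
  fixes F :: "'i \<Rightarrow> 'a::euclidean_space \<Rightarrow> real" and a u :: "'i \<Rightarrow> 'a"
  assumes "finite I"
    and biorth: "\<forall>i\<in>I. \<forall>j\<in>I. a i \<bullet> u j = (if i = j then 1 else 0)"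
    and cont: "\<forall>i\<in>I. continuous_on UNIV (F i)"
    and approx: "\<And>i y. i \<in> I \<Longrightarrow> norm (y - x) \<le> t * (norm v + \<epsilon>) \<Longrightarrow>
      \<bar>F i y - a i \<bullet> (y - x)\<bar> \<le> \<eta> * norm (y - x)"
    and null: "\<forall>i\<in>I. a i \<bullet> v = 0"
    and "0 < t" "0 < \<epsilon>" "0 \<le> \<eta>" and small: "\<eta> * (norm v + \<epsilon>) * (\<Sum>i\<in>I. norm (u i)) \<le> \<epsilon>"
  obtains y where "\<forall>i\<in>I. F i y = 0" "norm (y - x - t *\<^sub>R v) \<le> \<epsilon> * t"
proof -
  define c where "c = x + t *\<^sub>R v"
  have residual: "norm (\<Sum>i\<in>I. (a i \<bullet> (y - c) - F i y) *\<^sub>R u i) \<le> \<epsilon> * t"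
    if y: "y \<in> cball c (\<epsilon> * t)" for y
  proof -
    have "norm (y - x) \<le> norm (y - c) + norm (t *\<^sub>R v)"
      by (metis c_def diff_diff_eq norm_triangle_sub add.commute)
    also have "\<dots> \<le> t * (norm v + \<epsilon>)"
      using y \<open>0 < t\<close> by (simp add: dist_norm norm_minus_commute algebra_simps)
    finally have near: "norm (y - x) \<le> t * (norm v + \<epsilon>)" .
    have "\<bar>a i \<bullet> (y - c) - F i y\<bar> \<le> \<eta> * (t * (norm v + \<epsilon>))" if "i \<in> I" for i
    proof -
      have "a i \<bullet> (y - c) = a i \<bullet> (y - x)"
        using null that by (simp add: c_def inner_diff_right inner_add_right)
      then have "\<bar>a i \<bullet> (y - c) - F i y\<bar> \<le> \<eta> * norm (y - x)"
        using approx[OF that near] by (simp add: abs_minus_commute)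
      also have "\<dots> \<le> \<eta> * (t * (norm v + \<epsilon>))"
        using near \<open>0 \<le> \<eta>\<close> by (rule mult_left_mono)
      finally show ?thesis .
    qed
    then have "norm (\<Sum>i\<in>I. (a i \<bullet> (y - c) - F i y) *\<^sub>R u i) \<le> \<eta> * (t * (norm v + \<epsilon>)) * (\<Sum>i\<in>I. norm (u i))"
      by (simp add: norm_sum_scaleR_le)
    also have "\<dots> = t * (\<eta> * (norm v + \<epsilon>) * (\<Sum>i\<in>I. norm (u i)))"
      by (simp add: algebra_simps)
    also have "\<dots> \<le> t * \<epsilon>"
      using small \<open>0 < t\<close> by (simp add: mult_left_mono)
    finally show ?thesis
      by (simp add: mult.commute)
  qed
  have "\<forall>i\<in>I. continuous_on (cball c (\<epsilon> * t)) (F i)"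
    using cont continuous_on_subset by blast
  moreover have "0 \<le> \<epsilon> * t"
    using \<open>0 < \<epsilon>\<close> \<open>0 < t\<close> by simp
  ultimately obtain y where "y \<in> cball c (\<epsilon> * t)" "\<forall>i\<in>I. F i y = 0"
    using biorthogonal_newton_zero[OF assms(1) biorth _ _ residual] by blast
  then show ?thesis
    using that by (simp add: c_def dist_norm norm_minus_commute diff_diff_eq)
qed

lemma null_space_subset_tangent_cone:
  fixes F :: "'i \<Rightarrow> 'a::euclidean_space \<Rightarrow> real" and a :: "'i \<Rightarrow> 'a"
  assumes "finite I"
    and cont: "\<forall>i\<in>I. continuous_on UNIV (F i)"
    and deriv: "\<forall>i\<in>I. (F i has_derivative (\<lambda>h. a i \<bullet> h)) (at x)"
    and zero: "\<forall>i\<in>I. F i x = 0"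
    and surj: "\<forall>c. \<exists>w. \<forall>i\<in>I. a i \<bullet> w = c i"
    and null: "\<forall>i\<in>I. a i \<bullet> v = 0"
  shows "v \<in> tangent_cone {y. \<forall>i\<in>I. F i y = 0} x"
  unfolding tangent_cone_def
proof (intro CollectI allI impI)
  fix \<epsilon> :: real assume "\<epsilon> > 0"
  obtain u where u: "\<forall>i\<in>I. \<forall>j\<in>I. a i \<bullet> u j = (if i = j then 1 else 0)"
    using inner_surjective_imp_biorthogonal[OF surj] .
  define U where "U = (\<Sum>i\<in>I. norm (u i))"
  define V where "V = norm v + \<epsilon>"
  define \<eta> where "\<eta> = \<epsilon> / ((U + 1) * V)"
  have "U \<ge> 0" "V > 0"
    using \<open>\<epsilon> > 0\<close> by (simp_all add: U_def V_def sum_nonneg add_nonneg_pos)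
  then have "\<eta> > 0"
    using \<open>\<epsilon> > 0\<close> by (simp add: \<eta>_def)
  have "\<eta> * V * U = \<epsilon> * (U / (U + 1))"
    using \<open>U \<ge> 0\<close> \<open>V > 0\<close> by (simp add: \<eta>_def)
  also have "\<dots> \<le> \<epsilon>"
    using \<open>U \<ge> 0\<close> \<open>\<epsilon> > 0\<close> by (intro mult_left_le) simp_all
  finally have small: "\<eta> * V * U \<le> \<epsilon>" .
  obtain \<delta> where "\<delta> > 0" and \<delta>: "\<And>i y. i \<in> I \<Longrightarrow> norm (y - x) < \<delta> \<Longrightarrow>
      norm (F i y - F i x - a i \<bullet> (y - x)) \<le> \<eta> * norm (y - x)"
  proof (rule has_derivative_finite_uniform[OF assms(1) deriv \<open>\<eta> > 0\<close>])
    fix \<delta> assume "\<delta> > 0" "\<And>i y. i \<in> I \<Longrightarrow> norm (y - x) < \<delta> \<Longrightarrow>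
      norm (F i y - F i x - a i \<bullet> (y - x)) \<le> \<eta> * norm (y - x)"
    then show thesis
      using that by blast
  qed
  define t where "t = min \<epsilon> (\<delta> / (2 * V))"
  have t: "0 < t" "t \<le> \<epsilon>" "t * V < \<delta>"
    using \<open>\<epsilon> > 0\<close> \<open>\<delta> > 0\<close> \<open>V > 0\<close> by (auto simp: t_def min_def field_simps)
  obtain y where "\<forall>i\<in>I. F i y = 0" "norm (y - x - t *\<^sub>R v) \<le> \<epsilon> * t"
  proof (rule zero_near_ray[OF assms(1) u cont _ null t(1) \<open>\<epsilon> > 0\<close> less_imp_le[OF \<open>\<eta> > 0\<close>]])
    show "\<bar>F i y - a i \<bullet> (y - x)\<bar> \<le> \<eta> * norm (y - x)" if "i \<in> I" "norm (y - x) \<le> t * (norm v + \<epsilon>)" for i y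
      using \<delta>[of i y] zero that t(3) by (simp add: V_def)
  qed (use small in \<open>simp_all add: U_def V_def\<close>)
  then show "\<exists>t y. 0 < t \<and> t \<le> \<epsilon> \<and> y \<in> {y. \<forall>i\<in>I. F i y = 0} \<and> norm (y - x - t *\<^sub>R v) \<le> \<epsilon> * t"
    using t by blast
qed

lemma isolated_tangent_cone:
  assumes isolated: "x isolated_in S" and "v \<in> tangent_cone S x"
  shows "v = 0"
proof (rule ccontr)
  assume "v \<noteq> 0"
  obtain e where "e > 0" and e: "\<And>y. y \<in> S \<Longrightarrow> dist x y < e \<Longrightarrow> y = x"
    using isolated unfolding isolated_in_dist_Ex_iff by auto
  define \<epsilon> where "\<epsilon> = min (min 1 (norm v / 2)) (e / (2 * (norm v + 1)))"
  have \<epsilon>: "\<epsilon> > 0" "\<epsilon> \<le> 1" "\<epsilon> \<le> norm v / 2" "\<epsilon> \<le> e / (2 * (norm v + 1))"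
    using \<open>v \<noteq> 0\<close> \<open>e > 0\<close> norm_ge_zero[of v] unfolding \<epsilon>_def
    by (simp_all only: min_le_iff_disj min_less_iff_conj) (auto intro!: divide_pos_pos add_nonneg_pos)
  then have "\<epsilon> < norm v" "\<epsilon> * (norm v + 1) < e"
    using \<open>v \<noteq> 0\<close> \<open>e > 0\<close> norm_ge_zero[of v]
    by (simp_all add: pos_le_divide_eq algebra_simps)
  obtain t y where t: "0 < t" "t \<le> \<epsilon>" and y: "y \<in> S" "norm (y - x - t *\<^sub>R v) \<le> \<epsilon> * t"
    and near: "norm (y - x) \<le> t * (norm v + 1)"
    using tangent_coneE[OF \<open>v \<in> tangent_cone S x\<close> \<epsilon>(1,2)] .
  have "y \<noteq> x"
    using y(2) t(1) \<open>\<epsilon> < norm v\<close> by (auto simp: mult.commute)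
  moreover have "norm (y - x) < e"
    using near mult_right_mono[OF t(2), of "norm v + 1"] \<open>\<epsilon> * (norm v + 1) < e\<close> by simp
  ultimately show False
    using e y(1) by (simp add: dist_norm norm_minus_commute)
qed

lemma gradient_orthogonal_tangent_cone:
  fixes \<psi> :: "'a::euclidean_space \<Rightarrow> real"
  assumes deriv_\<psi>: "(\<psi> has_derivative (\<lambda>h. w \<bullet> h)) (at x)"
    and "x \<in> S" "\<delta> > 0" and vanish: "\<And>y. y \<in> S \<Longrightarrow> norm (y - x) < \<delta> \<Longrightarrow> \<psi> y = 0"
    and tangent: "v \<in> tangent_cone S x"
  shows "w \<bullet> v = 0"
proof (rule ccontr)
  assume "w \<bullet> v \<noteq> 0"
  define \<alpha> where "\<alpha> = \<bar>w \<bullet> v\<bar>"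
  define V where "V = norm v + 1"
  have "\<alpha> > 0" "V > 0"
    using \<open>w \<bullet> v \<noteq> 0\<close> by (simp_all add: \<alpha>_def V_def add_nonneg_pos)
  then have "\<alpha> / (4 * V) > 0"
    by simp
  then obtain \<delta>' where "\<delta>' > 0"
    and \<delta>': "\<And>y. norm (y - x) < \<delta>' \<Longrightarrow> \<bar>\<psi> y - \<psi> x - w \<bullet> (y - x)\<bar> \<le> \<alpha> / (4 * V) * norm (y - x)"
    using deriv_\<psi> unfolding has_derivative_at_alt real_norm_def by blast
  define \<epsilon> where "\<epsilon> = min (min 1 (\<alpha> / (4 * (norm w + 1)))) (min \<delta> \<delta>' / (2 * V))"
  have \<epsilon>: "\<epsilon> > 0" "\<epsilon> \<le> 1" "\<epsilon> \<le> \<alpha> / (4 * (norm w + 1))" "\<epsilon> \<le> min \<delta> \<delta>' / (2 * V)"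
    using \<open>\<alpha> > 0\<close> \<open>V > 0\<close> \<open>\<delta> > 0\<close> \<open>\<delta>' > 0\<close> norm_ge_zero[of w] unfolding \<epsilon>_def
    by (simp_all only: min_le_iff_disj min_less_iff_conj) (auto intro!: divide_pos_pos add_nonneg_pos)
  have "norm w * \<epsilon> \<le> (norm w + 1) * \<epsilon>"
    using \<open>\<epsilon> > 0\<close> by simp
  also have "\<dots> \<le> \<alpha> / 4"
    using \<epsilon>(3) norm_ge_zero[of w] by (simp add: pos_le_divide_eq algebra_simps)
  finally have "norm w * \<epsilon> \<le> \<alpha> / 4" .
  obtain t y where t: "0 < t" "t \<le> \<epsilon>" and y: "y \<in> S" "norm (y - x - t *\<^sub>R v) \<le> \<epsilon> * t"
    and near: "norm (y - x) \<le> t * V"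
    using tangent_coneE[OF tangent \<epsilon>(1,2)] unfolding V_def .
  have "t * V \<le> \<epsilon> * V"
    using t(2) \<open>V > 0\<close> by simp
  also have "\<dots> < min \<delta> \<delta>'"
    using \<epsilon>(4) \<open>V > 0\<close> \<open>\<delta> > 0\<close> \<open>\<delta>' > 0\<close> by (simp add: pos_le_divide_eq)
  finally have "norm (y - x) < min \<delta> \<delta>'"
    using near by linarith
  then have "\<psi> y = 0" "\<psi> x = 0"
    using vanish y(1) \<open>x \<in> S\<close> \<open>\<delta> > 0\<close> by auto
  then have "\<bar>w \<bullet> (y - x)\<bar> \<le> \<alpha> / (4 * V) * norm (y - x)"
    using \<delta>'[of y] \<open>norm (y - x) < min \<delta> \<delta>'\<close> by simp
  also have "\<dots> \<le> \<alpha> / (4 * V) * (t * V)"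
    using near \<open>\<alpha> > 0\<close> \<open>V > 0\<close> by (intro mult_left_mono) simp_all
  finally have close: "\<bar>w \<bullet> (y - x)\<bar> \<le> t * \<alpha> / 4"
    using \<open>V > 0\<close> by (simp add: mult.commute)
  have "\<bar>w \<bullet> (y - x - t *\<^sub>R v)\<bar> \<le> norm w * (\<epsilon> * t)"
    using Cauchy_Schwarz_ineq2[of w "y - x - t *\<^sub>R v"] mult_left_mono[OF y(2) norm_ge_zero[of w]] by linarith
  also have "\<dots> \<le> t * \<alpha> / 4"
    using mult_right_mono[OF \<open>norm w * \<epsilon> \<le> \<alpha> / 4\<close> less_imp_le[OF t(1)]] by (simp add: algebra_simps)
  finally have "\<bar>w \<bullet> (y - x - t *\<^sub>R v)\<bar> \<le> t * \<alpha> / 4" .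
  moreover have "t * \<alpha> = \<bar>w \<bullet> (y - x) - w \<bullet> (y - x - t *\<^sub>R v)\<bar>"
    using t(1) by (simp add: \<alpha>_def inner_diff_right abs_mult)
  ultimately have "t * \<alpha> \<le> t * \<alpha> / 2"
    using close by linarith
  then show False
    using t(1) \<open>\<alpha> > 0\<close> by simp
qed

lemma transversal_isolated_zero_basis:
  fixes F :: "'i \<Rightarrow> 'a::euclidean_space \<Rightarrow> real" and G :: "'j \<Rightarrow> 'a \<Rightarrow> real"
  assumes "finite I" "finite J"
    and dF: "\<forall>i\<in>I. \<forall>x. (F i has_derivative (\<lambda>v. gF i x \<bullet> v)) (at x)"
    and dG: "\<forall>j\<in>J. \<forall>y. (G j has_derivative (\<lambda>v. gG j y \<bullet> v)) (at y)"
    and surj_F: "\<forall>c. \<exists>w. \<forall>i\<in>I. gF i z \<bullet> w = c i" and surj_G: "\<forall>d. \<exists>w. \<forall>j\<in>J. gG j z \<bullet> w = d j"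
    and transversal: "\<forall>c d. (\<Sum>i\<in>I. c i *\<^sub>R gF i z) = (\<Sum>j\<in>J. d j *\<^sub>R gG j z) \<longrightarrow>
      (\<Sum>i\<in>I. c i *\<^sub>R gF i z) = 0"
    and isolated: "z isolated_in {y. (\<forall>i\<in>I. F i y = 0) \<and> (\<forall>j\<in>J. G j y = 0)}"
  shows "\<forall>c. \<exists>w. \<forall>l\<in>I <+> J. case_sum (\<lambda>i. gF i z) (\<lambda>j. gG j z) l \<bullet> w = c l"
    and "\<forall>h. (\<forall>l\<in>I <+> J. case_sum (\<lambda>i. gF i z) (\<lambda>j. gG j z) l \<bullet> h = 0) \<longrightarrow> h = 0"
proof -
  show surj: "\<forall>c. \<exists>w. \<forall>l\<in>I <+> J. case_sum (\<lambda>i. gF i z) (\<lambda>j. gG j z) l \<bullet> w = c l"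
    by (rule transversal_imp_inner_surjective[OF assms(1,2) surj_F surj_G transversal])
  have "isCont (F i) y" if "i \<in> I" for i y
    using dF that has_derivative_continuous by blast
  moreover have "isCont (G j) y" if "j \<in> J" for j y
    using dG that has_derivative_continuous by blast
  ultimately have cont: "\<forall>l\<in>I <+> J. continuous_on UNIV (case_sum F G l)"
    by (simp add: ball_Plus_iff continuous_at_imp_continuous_on)
  have deriv: "\<forall>l\<in>I <+> J. (case_sum F G l has_derivative
      (\<lambda>h. case_sum (\<lambda>i. gF i z) (\<lambda>j. gG j z) l \<bullet> h)) (at z)"
    using dF dG by (simp add: ball_Plus_iff)
  have iso: "z isolated_in {y. \<forall>l\<in>I <+> J. case_sum F G l y = 0}"
    using isolated by (simp add: ball_Plus_iff)
  then have zero: "\<forall>l\<in>I <+> J. case_sum F G l z = 0"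
    by (simp add: isolated_in_dist_Ex_iff)
  show "\<forall>h. (\<forall>l\<in>I <+> J. case_sum (\<lambda>i. gF i z) (\<lambda>j. gG j z) l \<bullet> h = 0) \<longrightarrow> h = 0"
  proof (intro allI impI)
    fix h assume "\<forall>l\<in>I <+> J. case_sum (\<lambda>i. gF i z) (\<lambda>j. gG j z) l \<bullet> h = 0"
    then have "h \<in> tangent_cone {y. \<forall>l\<in>I <+> J. case_sum F G l y = 0} z"
      by (rule null_space_subset_tangent_cone[OF finite_Plus[OF assms(1,2)] cont deriv zero surj])
    then show "h = 0"
      by (rule isolated_tangent_cone[OF iso])
  qed
qed

section \<open>Sections by perturbed tangent planes\<close>

lemma perturbed_plane_section:
  fixes G :: "'j \<Rightarrow> 'a::euclidean_space \<Rightarrow> real" and a a' :: "'i \<Rightarrow> 'a" and b :: "'j \<Rightarrow> 'a"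
    and u :: "'i + 'j \<Rightarrow> 'a" and I :: "'i set" and J :: "'j set"
  defines "e \<equiv> case_sum a b" and "U \<equiv> \<Sum>l\<in>I <+> J. norm (u l)"
  assumes "finite I" "finite J"
    and biorth: "\<forall>l\<in>I <+> J. \<forall>l'\<in>I <+> J. e l \<bullet> u l' = (if l = l' then 1 else 0)"
    and span: "\<forall>h. (\<forall>l\<in>I <+> J. e l \<bullet> h = 0) \<longrightarrow> h = 0"
    and cont_G: "\<forall>j\<in>J. continuous_on (cball z \<rho>) (G j)"
    and strict_G: "\<forall>j\<in>J. \<forall>y\<in>cball z \<rho>. \<forall>y'\<in>cball z \<rho>. \<bar>G j y - G j y' - b j \<bullet> (y - y')\<bar> \<le> \<eta> * norm (y - y')"
    and zero_G: "\<forall>j\<in>J. G j z = 0"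
    and close: "\<forall>i\<in>I. norm (a' i - a i) \<le> \<eta>" and small: "\<forall>i\<in>I. \<bar>s i\<bar> \<le> \<sigma>"
    and "0 \<le> \<eta>" "\<eta> * U \<le> 1 / 2" "0 \<le> \<sigma>" "2 * U * \<sigma> < \<rho>"
  shows "\<exists>y. ball z \<rho> \<inter> {y. (\<forall>j\<in>J. G j y = 0) \<and> (\<forall>i\<in>I. a' i \<bullet> (y - z) = s i)} = {y} \<and>
    norm (y - z) \<le> 2 * U * \<sigma>"
proof -
  define N where "N = I <+> J"
  define \<Phi> where "\<Phi> = case_sum (\<lambda>i y. a' i \<bullet> (y - z) - s i) G"
  have "finite N"
    using assms(3,4) by (simp add: N_def)
  have approx: "\<forall>l\<in>N. \<forall>y\<in>cball z \<rho>. \<forall>y'\<in>cball z \<rho>. \<bar>\<Phi> l y - \<Phi> l y' - e l \<bullet> (y - y')\<bar> \<le> \<eta> * norm (y - y')"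
  proof -
    have "\<bar>(a' i - a i) \<bullet> (y - y')\<bar> \<le> \<eta> * norm (y - y')" if "i \<in> I" for i y y'
      using Cauchy_Schwarz_ineq2[of "a' i - a i" "y - y'"] close that
      by (meson mult_right_mono norm_ge_zero order_trans)
    then show ?thesis
      using strict_G by (simp add: N_def ball_Plus_iff \<Phi>_def e_def algebra_simps inner_diff_left inner_diff_right)
  qed
  have cont: "\<forall>l\<in>N. continuous_on S (\<Phi> l)" if "S \<subseteq> cball z \<rho>" for S
    using cont_G that unfolding N_def ball_Plus_iff \<Phi>_def sum.case
    by (auto intro!: continuous_intros intro: continuous_on_subset)
  have zeros: "(\<forall>l\<in>N. \<Phi> l y = 0) \<longleftrightarrow> (\<forall>j\<in>J. G j y = 0) \<and> (\<forall>i\<in>I. a' i \<bullet> (y - z) = s i)" for y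
    unfolding N_def ball_Plus_iff \<Phi>_def sum.case by auto
  have "U \<ge> 0"
    by (simp add: U_def sum_nonneg)
  then have sub: "cball z (2 * U * \<sigma>) \<subseteq> ball z \<rho>"
    using \<open>2 * U * \<sigma> < \<rho>\<close> by (auto simp: subset_iff)
  have "0 \<le> 2 * U * \<sigma>"
    using \<open>0 \<le> \<sigma>\<close> \<open>U \<ge> 0\<close> by simp
  then have "z \<in> cball z \<rho>"
    using \<open>2 * U * \<sigma> < \<rho>\<close> by simp
  obtain y where y: "y \<in> cball z (2 * U * \<sigma>)" "\<forall>l\<in>N. \<Phi> l y = 0"
  proof (rule almost_linear_zero_exists[OF \<open>finite N\<close> biorth[folded N_def], of z \<sigma> \<Phi> \<eta>])
    have sub': "cball z (2 * U * \<sigma>) \<subseteq> cball z \<rho>"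
      using sub ball_subset_cball by blast
    then show "\<forall>l\<in>N. continuous_on (cball z (2 * (\<Sum>l\<in>N. norm (u l)) * \<sigma>)) (\<Phi> l)"
      using cont by (simp add: U_def N_def)
    show "\<forall>l\<in>N. \<forall>y\<in>cball z (2 * (\<Sum>l\<in>N. norm (u l)) * \<sigma>). \<bar>\<Phi> l y - \<Phi> l z - e l \<bullet> (y - z)\<bar> \<le> \<eta> * norm (y - z)"
      unfolding N_def U_def[symmetric] using approx[unfolded N_def] sub' \<open>z \<in> cball z \<rho>\<close> by blast
    show "\<forall>l\<in>N. \<bar>\<Phi> l z\<bar> \<le> \<sigma>"
      using small zero_G \<open>0 \<le> \<sigma>\<close> by (simp add: N_def ball_Plus_iff \<Phi>_def)
  qed (use \<open>0 \<le> \<eta>\<close> \<open>\<eta> * U \<le> 1 / 2\<close> \<open>0 \<le> \<sigma>\<close> that in \<open>simp_all add: U_def N_def\<close>)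
  have "y' = y" if "y' \<in> ball z \<rho>" "\<forall>l\<in>N. \<Phi> l y' = 0" for y'
    using almost_linear_zero_unique[OF \<open>finite N\<close> biorth[folded N_def] span[folded N_def] approx]
      \<open>\<eta> * U \<le> 1 / 2\<close> that y sub by (force simp: U_def N_def)
  then have "ball z \<rho> \<inter> {y. (\<forall>j\<in>J. G j y = 0) \<and> (\<forall>i\<in>I. a' i \<bullet> (y - z) = s i)} = {y}"
    using y sub zeros by blast
  then show ?thesis
    using y(1) by (auto simp: dist_norm norm_minus_commute)
qed

lemma tangent_plane_section_at:
  fixes F :: "'i \<Rightarrow> 'a::euclidean_space \<Rightarrow> real" and G :: "'j \<Rightarrow> 'a \<Rightarrow> real"
    and gF :: "'i \<Rightarrow> 'a \<Rightarrow> 'a" and gG :: "'j \<Rightarrow> 'a \<Rightarrow> 'a" and z :: 'a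
    and u :: "'i + 'j \<Rightarrow> 'a" and I :: "'i set" and J :: "'j set"
  defines "e \<equiv> case_sum (\<lambda>i. gF i z) (\<lambda>j. gG j z)" and "U \<equiv> \<Sum>l\<in>I <+> J. norm (u l)"
  assumes "finite I" "finite J"
    and dF: "\<forall>i\<in>I. \<forall>x. (F i has_derivative (\<lambda>v. gF i x \<bullet> v)) (at x)"
    and dG: "\<forall>j\<in>J. \<forall>y. (G j has_derivative (\<lambda>v. gG j y \<bullet> v)) (at y)"
    and lipF: "\<forall>i\<in>I. K-lipschitz_on (cball z \<rho>) (gF i)"
    and lipG: "\<forall>j\<in>J. K-lipschitz_on (cball z \<rho>) (gG j)"
    and zF: "\<forall>i\<in>I. F i z = 0" and zG: "\<forall>j\<in>J. G j z = 0"
    and biorth: "\<forall>l\<in>I <+> J. \<forall>l'\<in>I <+> J. e l \<bullet> u l' = (if l = l' then 1 else 0)"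
    and span: "\<forall>h. (\<forall>l\<in>I <+> J. e l \<bullet> h = 0) \<longrightarrow> h = 0"
    and "0 \<le> K" "K * \<rho> * U \<le> 1 / 2" and "x \<in> ball z \<rho>" and Fx: "\<forall>i\<in>I. F i x = 0"
  shows "\<exists>y. ball z \<rho> \<inter> {y. (\<forall>j\<in>J. G j y = 0) \<and> (\<forall>i\<in>I. gF i x \<bullet> (y - x) = 0)} = {y} \<and>
    norm (y - z) \<le> 2 * U * K * (norm (x - z))\<^sup>2"
proof -
  define d where "d = norm (x - z)"
  have "0 \<le> d" "d < \<rho>" "x \<in> cball z \<rho>"
    using \<open>x \<in> ball z \<rho>\<close> by (auto simp: d_def dist_norm norm_minus_commute)
  then have "z \<in> cball z \<rho>"
    by simp
  have "U \<ge> 0"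
    by (simp add: U_def sum_nonneg)
  have "norm (gF i x - gF i z) \<le> K * d" if "i \<in> I" for i
    using lipschitz_onD[OF bspec[OF lipF that] \<open>x \<in> cball z \<rho>\<close> \<open>z \<in> cball z \<rho>\<close>]
    by (simp add: d_def dist_norm)
  then have close: "\<forall>i\<in>I. norm (gF i x - gF i z) \<le> K * \<rho>"
    using \<open>d < \<rho>\<close> \<open>0 \<le> K\<close> by (meson less_imp_le mult_left_mono order_trans)
  have small: "\<forall>i\<in>I. \<bar>gF i x \<bullet> (x - z)\<bar> \<le> K * d\<^sup>2"
    using dF lipF zF Fx \<open>x \<in> cball z \<rho>\<close> unfolding d_def by (blast intro: lipschitz_gradient_chord_bound)
  have strict_G: "\<forall>j\<in>J. \<forall>y\<in>cball z \<rho>. \<forall>y'\<in>cball z \<rho>. \<bar>G j y - G j y' - gG j z \<bullet> (y - y')\<bar> \<le> K * \<rho> * norm (y - y')"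
    using dG lipG by (blast intro: lipschitz_gradient_strict_bound)
  have "isCont (G j) y" if "j \<in> J" for j y
    using dG that has_derivative_continuous by blast
  then have cont_G: "\<forall>j\<in>J. continuous_on (cball z \<rho>) (G j)"
    by (simp add: continuous_at_imp_continuous_on)
  have "2 * U * (K * d\<^sup>2) = 2 * (K * U * d) * d"
    by (simp add: power2_eq_square algebra_simps)
  also have "\<dots> \<le> 2 * (K * U * \<rho>) * d"
    using \<open>d < \<rho>\<close> \<open>0 \<le> d\<close> \<open>0 \<le> K\<close> \<open>U \<ge> 0\<close> by (intro mult_right_mono mult_left_mono) simp_all
  also have "\<dots> = 2 * (K * \<rho> * U) * d"
    by (simp add: algebra_simps)
  also have "\<dots> \<le> d"
    using mult_right_mono[OF \<open>K * \<rho> * U \<le> 1 / 2\<close> \<open>0 \<le> d\<close>] by simp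
  finally have "2 * U * (K * d\<^sup>2) < \<rho>"
    using \<open>d < \<rho>\<close> by simp
  then obtain y where "ball z \<rho> \<inter> {y. (\<forall>j\<in>J. G j y = 0) \<and> (\<forall>i\<in>I. gF i x \<bullet> (y - z) = gF i x \<bullet> (x - z))} = {y}"
      and "norm (y - z) \<le> 2 * U * (K * d\<^sup>2)"
    using perturbed_plane_section[OF assms(3,4) biorth[unfolded e_def] span[unfolded e_def] cont_G strict_G zG
        close small] \<open>0 \<le> K\<close> \<open>K * \<rho> * U \<le> 1 / 2\<close> \<open>d < \<rho>\<close> \<open>0 \<le> d\<close>
    by (auto simp: U_def)
  moreover have "gF i x \<bullet> (y - z) = gF i x \<bullet> (x - z) \<longleftrightarrow> gF i x \<bullet> (y - x) = 0" for i y
    by (simp add: inner_diff_right algebra_simps)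
  ultimately show ?thesis
    by (auto simp: d_def algebra_simps)
qed

lemma tangent_plane_section:
  fixes F :: "'i \<Rightarrow> 'a::euclidean_space \<Rightarrow> real" and G :: "'j \<Rightarrow> 'a \<Rightarrow> real"
    and gF :: "'i \<Rightarrow> 'a \<Rightarrow> 'a" and gG :: "'j \<Rightarrow> 'a \<Rightarrow> 'a"
  assumes "finite I" "finite J"
    and dF: "\<forall>i\<in>I. \<forall>x. (F i has_derivative (\<lambda>v. gF i x \<bullet> v)) (at x)"
    and dG: "\<forall>j\<in>J. \<forall>y. (G j has_derivative (\<lambda>v. gG j y \<bullet> v)) (at y)"
    and lipF: "\<forall>i\<in>I. \<exists>\<rho>>0. \<exists>K. K-lipschitz_on (cball z \<rho>) (gF i)"
    and lipG: "\<forall>j\<in>J. \<exists>\<rho>>0. \<exists>K. K-lipschitz_on (cball z \<rho>) (gG j)"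
    and zF: "\<forall>i\<in>I. F i z = 0" and zG: "\<forall>j\<in>J. G j z = 0"
    and surj: "\<forall>c. \<exists>w. \<forall>l\<in>I <+> J. case_sum (\<lambda>i. gF i z) (\<lambda>j. gG j z) l \<bullet> w = c l"
    and span: "\<forall>h. (\<forall>l\<in>I <+> J. case_sum (\<lambda>i. gF i z) (\<lambda>j. gG j z) l \<bullet> h = 0) \<longrightarrow> h = 0"
  obtains C where "\<forall>\<^sub>F \<rho> in at_right 0. \<forall>x\<in>ball z \<rho>. (\<forall>i\<in>I. F i x = 0) \<longrightarrow>
    (\<exists>y. ball z \<rho> \<inter> {y. (\<forall>j\<in>J. G j y = 0) \<and> (\<forall>i\<in>I. gF i x \<bullet> (y - x) = 0)} = {y} \<and>
         norm (y - z) \<le> C * (norm (x - z))\<^sup>2)"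
proof -
  have "\<forall>l\<in>I <+> J. \<exists>\<rho>>0. \<exists>K. K-lipschitz_on (cball z \<rho>) (case_sum gF gG l)"
    using lipF lipG by (simp add: ball_Plus_iff)
  then obtain \<rho>0 K where "\<rho>0 > 0" "K \<ge> 0"
    and lip: "\<forall>l\<in>I <+> J. K-lipschitz_on (cball z \<rho>0) (case_sum gF gG l)"
    by (rule lipschitz_on_cball_uniform[OF finite_Plus[OF assms(1,2)]])
  obtain u where u: "\<forall>l\<in>I <+> J. \<forall>l'\<in>I <+> J.
      case_sum (\<lambda>i. gF i z) (\<lambda>j. gG j z) l \<bullet> u l' = (if l = l' then 1 else 0)"
    using inner_surjective_imp_biorthogonal[OF surj] by blast
  define U where "U = (\<Sum>l\<in>I <+> J. norm (u l))"
  have "K * U \<ge> 0"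
    using \<open>K \<ge> 0\<close> by (simp add: U_def sum_nonneg)
  define b where "b = min \<rho>0 (1 / (2 * (K * U + 1)))"
  have "b > 0"
    using \<open>\<rho>0 > 0\<close> \<open>K * U \<ge> 0\<close> by (simp add: b_def add_nonneg_pos)
  have "\<forall>x\<in>ball z \<rho>. (\<forall>i\<in>I. F i x = 0) \<longrightarrow>
      (\<exists>y. ball z \<rho> \<inter> {y. (\<forall>j\<in>J. G j y = 0) \<and> (\<forall>i\<in>I. gF i x \<bullet> (y - x) = 0)} = {y} \<and>
         norm (y - z) \<le> (2 * U * K) * (norm (x - z))\<^sup>2)"
    if "0 < \<rho>" "\<rho> < b" for \<rho>
  proof (intro ballI impI)
    fix x assume "x \<in> ball z \<rho>" "\<forall>i\<in>I. F i x = 0"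
    have "\<rho> \<le> \<rho>0" "\<rho> * (2 * (K * U + 1)) \<le> 1"
      using that \<open>K * U \<ge> 0\<close> by (simp_all add: b_def pos_less_divide_eq add_nonneg_pos less_imp_le)
    then have "K * \<rho> * U \<le> 1 / 2"
      using \<open>0 < \<rho>\<close> by (simp add: algebra_simps)
    have "cball z \<rho> \<subseteq> cball z \<rho>0"
      using \<open>\<rho> \<le> \<rho>0\<close> by (rule subset_cball)
    then have "\<forall>l\<in>I <+> J. K-lipschitz_on (cball z \<rho>) (case_sum gF gG l)"
      using lip lipschitz_on_subset by blast
    then have "\<forall>i\<in>I. K-lipschitz_on (cball z \<rho>) (gF i)" "\<forall>j\<in>J. K-lipschitz_on (cball z \<rho>) (gG j)"
      by (simp_all add: ball_Plus_iff)
    from tangent_plane_section_at[OF assms(1-4) this zF zG u span \<open>K \<ge> 0\<close>]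
    show "\<exists>y. ball z \<rho> \<inter> {y. (\<forall>j\<in>J. G j y = 0) \<and> (\<forall>i\<in>I. gF i x \<bullet> (y - x) = 0)} = {y} \<and>
        norm (y - z) \<le> (2 * U * K) * (norm (x - z))\<^sup>2"
      using \<open>K * \<rho> * U \<le> 1 / 2\<close> \<open>x \<in> ball z \<rho>\<close> \<open>\<forall>i\<in>I. F i x = 0\<close> by (simp add: U_def)
  qed
  then show ?thesis
    using \<open>b > 0\<close> by (intro that[of "2 * U * K"]) (auto simp: eventually_at_right_field)
qed

section \<open>Local charts of manifolds\<close>

lemma local_defining_map_gradients:
  fixes F :: "nat \<Rightarrow> 'a::euclidean_space \<Rightarrow> real"
  assumes "local_defining_map X x m F"
  obtains gF U where
    "\<forall>i\<in>{..<m}. \<forall>y. (F i has_derivative (\<lambda>v. gF i y \<bullet> v)) (at y)"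
    "\<forall>i\<in>{..<m}. continuous_on UNIV (gF i)"
    "\<forall>i\<in>{..<m}. \<forall>z. \<exists>\<rho>>0. \<exists>K. K-lipschitz_on (cball z \<rho>) (gF i)"
    "\<forall>c. \<exists>w. \<forall>i\<in>{..<m}. gF i x \<bullet> w = c i"
    "{y. \<forall>i\<in>{..<m}. F i y = 0} \<subseteq> X" "open U" "x \<in> U" "X \<inter> U \<subseteq> {y. \<forall>i\<in>{..<m}. F i y = 0}"
proof -
  have C2: "\<forall>i<m. C2_fun (F i)" and surj: "\<forall>c::nat \<Rightarrow> real. \<exists>v. \<forall>i<m. frechet_derivative (F i) (at x) v = c i"
    and zero_X: "{y. \<forall>i<m. F i y = 0} \<subseteq> X" and U: "\<exists>U. open U \<and> x \<in> U \<and> X \<inter> U \<subseteq> {y. \<forall>i<m. F i y = 0}"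
    using assms unfolding local_defining_map_def by blast+
  have "\<forall>i\<in>{..<m}. \<exists>g. (\<forall>y. (F i has_derivative (\<lambda>v. g y \<bullet> v)) (at y)) \<and> continuous_on UNIV g \<and>
      (\<forall>z. \<exists>\<rho>>0. \<exists>K. K-lipschitz_on (cball z \<rho>) g)"
  proof
    fix i assume "i \<in> {..<m}"
    then obtain g where "\<And>y. (F i has_derivative (\<lambda>v. g y \<bullet> v)) (at y)" "continuous_on UNIV g"
      "\<And>z. \<exists>\<rho>>0. \<exists>K. K-lipschitz_on (cball z \<rho>) g"
      using C2_fun_gradient C2 by blast
    then show "\<exists>g. (\<forall>y. (F i has_derivative (\<lambda>v. g y \<bullet> v)) (at y)) \<and> continuous_on UNIV g \<and>
      (\<forall>z. \<exists>\<rho>>0. \<exists>K. K-lipschitz_on (cball z \<rho>) g)"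
      by blast
  qed
  then obtain gF where gF: "\<forall>i\<in>{..<m}. (\<forall>y. (F i has_derivative (\<lambda>v. gF i y \<bullet> v)) (at y)) \<and>
      continuous_on UNIV (gF i) \<and> (\<forall>z. \<exists>\<rho>>0. \<exists>K. K-lipschitz_on (cball z \<rho>) (gF i))"
    by (rule bchoice[THEN exE])
  then have "frechet_derivative (F i) (at x) = (\<lambda>v. gF i x \<bullet> v)" if "i < m" for i
    using that by (simp add: frechet_derivative_at[symmetric])
  then have "\<forall>c. \<exists>w. \<forall>i\<in>{..<m}. gF i x \<bullet> w = c i"
    using surj by (simp add: Ball_def)
  moreover have "{y. \<forall>i\<in>{..<m}. F i y = 0} \<subseteq> X"
    using zero_X by (simp add: Ball_def)
  moreover obtain U where "open U" "x \<in> U" "X \<inter> U \<subseteq> {y. \<forall>i\<in>{..<m}. F i y = 0}"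
    using U by (auto simp: Ball_def)
  ultimately show ?thesis
    using that gF by blast
qed

lemma local_defining_maps_null_subset:
  assumes X: "local_defining_map X x m F" and X': "local_defining_map X x m' F'" and "x \<in> X"
  shows "{v. \<forall>i<m. frechet_derivative (F i) (at x) v = 0} \<subseteq> {v. \<forall>i<m'. frechet_derivative (F' i) (at x) v = 0}"
proof
  obtain gF U where dF: "\<forall>i\<in>{..<m}. \<forall>y. (F i has_derivative (\<lambda>v. gF i y \<bullet> v)) (at y)"
    and "\<forall>i\<in>{..<m}. continuous_on UNIV (gF i)"
    and "\<forall>i\<in>{..<m}. \<forall>z. \<exists>\<rho>>0. \<exists>K. K-lipschitz_on (cball z \<rho>) (gF i)"
    and surj: "\<forall>c. \<exists>w. \<forall>i\<in>{..<m}. gF i x \<bullet> w = c i"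
    and zero_X: "{y. \<forall>i\<in>{..<m}. F i y = 0} \<subseteq> X"
    and "open U" "x \<in> U" and X_zero: "X \<inter> U \<subseteq> {y. \<forall>i\<in>{..<m}. F i y = 0}"
    by (rule local_defining_map_gradients[OF X])
  obtain gF' U' where dF': "\<forall>i\<in>{..<m'}. \<forall>y. (F' i has_derivative (\<lambda>v. gF' i y \<bullet> v)) (at y)"
    and "\<forall>i\<in>{..<m'}. continuous_on UNIV (gF' i)"
    and "\<forall>i\<in>{..<m'}. \<forall>z. \<exists>\<rho>>0. \<exists>K. K-lipschitz_on (cball z \<rho>) (gF' i)"
    and "\<forall>c. \<exists>w. \<forall>i\<in>{..<m'}. gF' i x \<bullet> w = c i"
    and "{y. \<forall>i\<in>{..<m'}. F' i y = 0} \<subseteq> X"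
    and "open U'" "x \<in> U'" and X_zero': "X \<inter> U' \<subseteq> {y. \<forall>i\<in>{..<m'}. F' i y = 0}"
    by (rule local_defining_map_gradients[OF X'])
  obtain \<delta> where "\<delta> > 0" "ball x \<delta> \<subseteq> U'"
    using \<open>open U'\<close> \<open>x \<in> U'\<close> open_contains_ball by blast
  have "isCont (F i) y" if "i \<in> {..<m}" for i y
    using dF that has_derivative_continuous by blast
  then have cont: "\<forall>i\<in>{..<m}. continuous_on UNIV (F i)"
    by (simp add: continuous_at_imp_continuous_on)
  have zero: "\<forall>i\<in>{..<m}. F i x = 0"
    using \<open>x \<in> X\<close> \<open>x \<in> U\<close> X_zero by blast
  fix v assume "v \<in> {v. \<forall>i<m. frechet_derivative (F i) (at x) v = 0}"
  moreover have "frechet_derivative (F i) (at x) = (\<lambda>h. gF i x \<bullet> h)" if "i < m" for i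
    using dF that by (simp add: frechet_derivative_at[symmetric])
  ultimately have tangent: "\<forall>i\<in>{..<m}. gF i x \<bullet> v = 0"
    by simp
  have "\<forall>i\<in>{..<m}. (F i has_derivative (\<lambda>h. gF i x \<bullet> h)) (at x)"
    using dF by blast
  then have cone: "v \<in> tangent_cone {y. \<forall>i\<in>{..<m}. F i y = 0} x"
    by (rule null_space_subset_tangent_cone[OF finite_lessThan cont _ zero surj tangent])
  have "gF' j x \<bullet> v = 0" if "j < m'" for j
  proof (rule gradient_orthogonal_tangent_cone[OF _ _ \<open>\<delta> > 0\<close> _ cone])
    show "(F' j has_derivative (\<lambda>h. gF' j x \<bullet> h)) (at x)"
      using dF' that by blast
    show "x \<in> {y. \<forall>i\<in>{..<m}. F i y = 0}"
      using zero by simp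
    fix y assume "y \<in> {y. \<forall>i\<in>{..<m}. F i y = 0}" "norm (y - x) < \<delta>"
    then have "y \<in> X" "y \<in> U'"
      using zero_X \<open>ball x \<delta> \<subseteq> U'\<close> by (auto simp: dist_norm norm_minus_commute)
    then show "F' j y = 0"
      using X_zero' that by blast
  qed
  moreover have "frechet_derivative (F' j) (at x) = (\<lambda>h. gF' j x \<bullet> h)" if "j < m'" for j
    using dF' that by (simp add: frechet_derivative_at[symmetric])
  ultimately show "v \<in> {v. \<forall>i<m'. frechet_derivative (F' i) (at x) v = 0}"
    by simp
qed

text \<open>The definition of \<^const>\<open>tangent_space\<close> picks some local defining map; by the previous
  lemma the choice does not matter.\<close>
lemma tangent_space_eq:
  assumes "local_defining_map X x m F" "x \<in> X"
  shows "tangent_space X x = {v. \<forall>i<m. frechet_derivative (F i) (at x) v = 0}"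
proof -
  define p where "p = (SOME p. local_defining_map X x (fst p) (snd p))"
  have "local_defining_map X x (fst p) (snd p)"
    unfolding p_def by (rule someI[of _ "(m, F)"]) (simp add: assms)
  then have "{v. \<forall>i<fst p. frechet_derivative (snd p i) (at x) v = 0} =
      {v. \<forall>i<m. frechet_derivative (F i) (at x) v = 0}"
    using local_defining_maps_null_subset assms by (intro equalityI) blast+
  then show ?thesis
    by (simp add: tangent_space_def p_def Let_def)
qed

lemma tangent_space_eventually_eq:
  assumes ldm: "local_defining_map X z m F"
    and dF: "\<forall>i\<in>{..<m}. \<forall>y. (F i has_derivative (\<lambda>v. gF i y \<bullet> v)) (at y)"
    and cont: "\<forall>i\<in>{..<m}. continuous_on UNIV (gF i)"
    and surj: "\<forall>c. \<exists>w. \<forall>i\<in>{..<m}. gF i z \<bullet> w = c i"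
  shows "\<forall>\<^sub>F x in nhds z. x \<in> X \<longrightarrow> tangent_space X x = {v. \<forall>i\<in>{..<m}. gF i x \<bullet> v = 0}"
proof -
  obtain \<eta> where "\<eta> > 0" and perturb: "\<And>a'. \<forall>i\<in>{..<m}. norm (a' i - gF i z) \<le> \<eta> \<Longrightarrow>
      \<forall>c. \<exists>w. \<forall>i\<in>{..<m}. a' i \<bullet> w = c i"
    using inner_surjective_perturb[OF finite_lessThan surj] by blast
  have close: "\<forall>\<^sub>F x in nhds z. \<forall>i\<in>{..<m}. norm (gF i x - gF i z) \<le> \<eta>"
  proof (rule eventually_ball_finite[OF finite_lessThan], rule ballI)
    fix i assume "i \<in> {..<m}"
    then have "isCont (gF i) z"
      using cont continuous_on_eq_continuous_at by blast
    then obtain \<delta> where "\<delta> > 0" "\<And>x. dist x z < \<delta> \<Longrightarrow> dist (gF i x) (gF i z) < \<eta>"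
      using \<open>\<eta> > 0\<close> unfolding continuous_at_eps_delta by blast
    then show "\<forall>\<^sub>F x in nhds z. norm (gF i x - gF i z) \<le> \<eta>"
      unfolding eventually_nhds_metric dist_norm by (meson less_imp_le)
  qed
  obtain U where "open U" "z \<in> U" and X_zero: "X \<inter> U \<subseteq> {y. \<forall>i<m. F i y = 0}"
    using ldm unfolding local_defining_map_def by blast
  have C2: "\<forall>i<m. C2_fun (F i)" and zero_X: "{y. \<forall>i<m. F i y = 0} \<subseteq> X"
    using ldm unfolding local_defining_map_def by blast+
  show ?thesis
    using close eventually_nhds_in_open[OF \<open>open U\<close> \<open>z \<in> U\<close>]
  proof eventually_elim
    case (elim x)
    have fd: "frechet_derivative (F i) (at x) = (\<lambda>v. gF i x \<bullet> v)" if "i < m" for i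
      using dF that by (simp add: frechet_derivative_at[symmetric])
    then have "\<forall>c::nat \<Rightarrow> real. \<exists>v. \<forall>i<m. frechet_derivative (F i) (at x) v = c i"
      using perturb[of "\<lambda>i. gF i x"] elim(1) by (simp add: Ball_def)
    then have "x \<in> X \<Longrightarrow> local_defining_map X x m F"
      unfolding local_defining_map_def using C2 zero_X X_zero \<open>open U\<close> elim(2) by blast
    then have "x \<in> X \<Longrightarrow> tangent_space X x = {v. \<forall>i<m. frechet_derivative (F i) (at x) v = 0}"
      using tangent_space_eq by blast
    then show ?case
      using fd by (simp add: Ball_def)
  qed
qed

locale C2_chart =
  fixes X :: "'a::euclidean_space set" and z :: 'a and m :: nat
    and F :: "nat \<Rightarrow> 'a \<Rightarrow> real" and gF :: "nat \<Rightarrow> 'a \<Rightarrow> 'a"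
  assumes gradient: "\<forall>i\<in>{..<m}. \<forall>x. (F i has_derivative (\<lambda>v. gF i x \<bullet> v)) (at x)"
    and lipschitz: "\<forall>i\<in>{..<m}. \<exists>\<rho>>0. \<exists>K. K-lipschitz_on (cball z \<rho>) (gF i)"
    and surjective: "\<forall>c. \<exists>w. \<forall>i\<in>{..<m}. gF i z \<bullet> w = c i"
    and normal: "\<And>c. (\<Sum>i<m. c i *\<^sub>R gF i z) \<in> normal_space X z"
    and zero_set_subset: "{y. \<forall>i\<in>{..<m}. F i y = 0} \<subseteq> X"
    and eventually_chart: "\<forall>\<^sub>F x in nhds z. (x \<in> X \<longleftrightarrow> (\<forall>i\<in>{..<m}. F i x = 0)) \<and>
        (x \<in> X \<longrightarrow> tangent_space X x = {v. \<forall>i\<in>{..<m}. gF i x \<bullet> v = 0})"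

lemma (in C2_chart) zero_at_base:
  assumes "z \<in> X"
  shows "\<forall>i\<in>{..<m}. F i z = 0"
  using eventually_nhds_x_imp_x[OF eventually_chart] assms by simp

lemma C2_manifold_chart:
  assumes "C2_manifold_around X z"
  shows "\<exists>m F gF. C2_chart X z m F gF"
proof -
  define p where "p = (SOME p. local_defining_map X z (fst p) (snd p))"
  have "\<exists>p. local_defining_map X z (fst p) (snd p)"
    using assms unfolding C2_manifold_around_def by auto
  then have ldm: "local_defining_map X z (fst p) (snd p)"
    unfolding p_def by (rule someI_ex)
  obtain gF U where dF: "\<forall>i\<in>{..<fst p}. \<forall>y. (snd p i has_derivative (\<lambda>v. gF i y \<bullet> v)) (at y)"
    and cont: "\<forall>i\<in>{..<fst p}. continuous_on UNIV (gF i)"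
    and lip: "\<forall>i\<in>{..<fst p}. \<forall>z. \<exists>\<rho>>0. \<exists>K. K-lipschitz_on (cball z \<rho>) (gF i)"
    and surj: "\<forall>c. \<exists>w. \<forall>i\<in>{..<fst p}. gF i z \<bullet> w = c i"
    and zero_X: "{y. \<forall>i\<in>{..<fst p}. snd p i y = 0} \<subseteq> X"
    and "open U" "z \<in> U" and X_zero: "X \<inter> U \<subseteq> {y. \<forall>i\<in>{..<fst p}. snd p i y = 0}"
    by (rule local_defining_map_gradients[OF ldm])
  have normal: "(\<Sum>i<fst p. c i *\<^sub>R gF i z) \<in> normal_space X z" for c
  proof -
    have "frechet_derivative (snd p i) (at z) = (\<lambda>v. gF i z \<bullet> v)" if "i < fst p" for i
      using dF that by (simp add: frechet_derivative_at[symmetric])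
    then have "(\<Sum>i<fst p. c i *\<^sub>R gF i z) \<bullet> v = (\<Sum>i<fst p. c i * frechet_derivative (snd p i) (at z) v)" for v
      unfolding inner_sum_left by (intro sum.cong) simp_all
    then show ?thesis
      by (auto simp: normal_space_def p_def[symmetric] Let_def)
  qed
  have near: "\<forall>\<^sub>F x in nhds z. (x \<in> X \<longleftrightarrow> (\<forall>i\<in>{..<fst p}. snd p i x = 0)) \<and>
      (x \<in> X \<longrightarrow> tangent_space X x = {v. \<forall>i\<in>{..<fst p}. gF i x \<bullet> v = 0})"
    using eventually_nhds_in_open[OF \<open>open U\<close> \<open>z \<in> U\<close>]
      tangent_space_eventually_eq[OF ldm dF cont surj]
    by eventually_elim (use zero_X X_zero in blast)
  have "\<forall>i\<in>{..<fst p}. \<exists>\<rho>>0. \<exists>K. K-lipschitz_on (cball z \<rho>) (gF i)"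
    using lip by blast
  then show ?thesis
    using dF surj normal zero_X near unfolding C2_chart_def by blast
qed

lemma eventually_nhds_imp_ball:
  fixes z :: "'a::metric_space"
  assumes "\<forall>\<^sub>F x in nhds z. P x"
  shows "\<forall>\<^sub>F \<rho> in at_right 0. \<forall>x\<in>ball z \<rho>. P x"
  using assms unfolding eventually_nhds_metric eventually_at_right_field
  by (auto simp: dist_commute)

lemma translate_Collect_eq:
  fixes x :: "'a::ab_group_add"
  shows "{x + v |v. P v} = {y. P (y - x)}"
proof (intro set_eqI iffI)
  fix y assume "y \<in> {x + v |v. P v}"
  then show "y \<in> {y. P (y - x)}"
    by auto
next
  fix y assume "y \<in> {y. P (y - x)}"
  then show "y \<in> {x + v |v. P v}"
    by (intro CollectI exI[of _ "y - x"]) simp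
qed

lemma C2_charts_transversal_basis:
  assumes X: "C2_chart X z m F gF" and Y: "C2_chart Y z k G gG"
    and "z \<in> X \<inter> Y" and isolated: "z isolated_in (X \<inter> Y)"
    and transversal: "normal_space X z \<inter> normal_space Y z = {0}"
  shows "\<forall>c. \<exists>w. \<forall>l\<in>{..<m} <+> {..<k}. case_sum (\<lambda>i. gF i z) (\<lambda>j. gG j z) l \<bullet> w = c l"
    and "\<forall>h. (\<forall>l\<in>{..<m} <+> {..<k}. case_sum (\<lambda>i. gF i z) (\<lambda>j. gG j z) l \<bullet> h = 0) \<longrightarrow> h = 0"
proof -
  have transversal_sums: "\<forall>c d. (\<Sum>i<m. c i *\<^sub>R gF i z) = (\<Sum>j<k. d j *\<^sub>R gG j z) \<longrightarrow>
      (\<Sum>i<m. c i *\<^sub>R gF i z) = 0"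
  proof (intro allI impI)
    fix c d assume "(\<Sum>i<m. c i *\<^sub>R gF i z) = (\<Sum>j<k. d j *\<^sub>R gG j z)"
    then have "(\<Sum>i<m. c i *\<^sub>R gF i z) \<in> normal_space X z \<inter> normal_space Y z"
      using C2_chart.normal[OF X, of c] C2_chart.normal[OF Y, of d] by simp
    then show "(\<Sum>i<m. c i *\<^sub>R gF i z) = 0"
      using transversal by simp
  qed
  have "z isolated_in {y. (\<forall>i\<in>{..<m}. F i y = 0) \<and> (\<forall>j\<in>{..<k}. G j y = 0)}"
    using C2_chart.zero_set_subset[OF X] C2_chart.zero_set_subset[OF Y]
      C2_chart.zero_at_base[OF X] C2_chart.zero_at_base[OF Y] \<open>z \<in> X \<inter> Y\<close>
    by (intro isolated_in_subset[OF isolated]) auto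
  from transversal_isolated_zero_basis[OF finite_lessThan finite_lessThan C2_chart.gradient[OF X]
      C2_chart.gradient[OF Y] C2_chart.surjective[OF X] C2_chart.surjective[OF Y] transversal_sums this]
  show "\<forall>c. \<exists>w. \<forall>l\<in>{..<m} <+> {..<k}. case_sum (\<lambda>i. gF i z) (\<lambda>j. gG j z) l \<bullet> w = c l"
    and "\<forall>h. (\<forall>l\<in>{..<m} <+> {..<k}. case_sum (\<lambda>i. gF i z) (\<lambda>j. gG j z) l \<bullet> h = 0) \<longrightarrow> h = 0" .
qed

lemma C2_charts_tangent_section:
  assumes X: "C2_chart X z m F gF" and Y: "C2_chart Y z k G gG"
    and "z \<in> X \<inter> Y" and isolated: "z isolated_in (X \<inter> Y)"
    and transversal: "normal_space X z \<inter> normal_space Y z = {0}"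
  obtains C where "\<forall>\<^sub>F \<rho> in at_right 0. \<forall>x\<in>X \<inter> ball z \<rho>.
    \<exists>y. Y \<inter> ball z \<rho> \<inter> {x + v |v. v \<in> tangent_space X x} = {y} \<and> norm (y - z) \<le> C * (norm (x - z))\<^sup>2"
proof -
  have "z \<in> X" "z \<in> Y"
    using \<open>z \<in> X \<inter> Y\<close> by simp_all
  obtain C where plane_section: "\<forall>\<^sub>F \<rho> in at_right 0. \<forall>x\<in>ball z \<rho>. (\<forall>i\<in>{..<m}. F i x = 0) \<longrightarrow>
      (\<exists>y. ball z \<rho> \<inter> {y. (\<forall>j\<in>{..<k}. G j y = 0) \<and> (\<forall>i\<in>{..<m}. gF i x \<bullet> (y - x) = 0)} = {y} \<and>
         norm (y - z) \<le> C * (norm (x - z))\<^sup>2)"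
    by (rule tangent_plane_section[OF finite_lessThan finite_lessThan C2_chart.gradient[OF X]
        C2_chart.gradient[OF Y] C2_chart.lipschitz[OF X] C2_chart.lipschitz[OF Y]
        C2_chart.zero_at_base[OF X \<open>z \<in> X\<close>] C2_chart.zero_at_base[OF Y \<open>z \<in> Y\<close>]
        C2_charts_transversal_basis[OF assms]])
  have chart_Y: "\<forall>\<^sub>F y in nhds z. y \<in> Y \<longleftrightarrow> (\<forall>j\<in>{..<k}. G j y = 0)"
    using C2_chart.eventually_chart[OF Y] by (rule eventually_mono) blast
  show ?thesis
  proof (rule that)
    show "\<forall>\<^sub>F \<rho> in at_right 0. \<forall>x\<in>X \<inter> ball z \<rho>.
      \<exists>y. Y \<inter> ball z \<rho> \<inter> {x + v |v. v \<in> tangent_space X x} = {y} \<and> norm (y - z) \<le> C * (norm (x - z))\<^sup>2"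
      using plane_section eventually_nhds_imp_ball[OF eventually_conj[OF C2_chart.eventually_chart[OF X] chart_Y]]
    proof eventually_elim
      case (elim \<rho>)
      show ?case
      proof
        fix x assume x: "x \<in> X \<inter> ball z \<rho>"
        then have Fx: "\<forall>i\<in>{..<m}. F i x = 0"
          and tangent: "tangent_space X x = {v. \<forall>i\<in>{..<m}. gF i x \<bullet> v = 0}"
          using elim(2) by blast+
        have "Y \<inter> ball z \<rho> = ball z \<rho> \<inter> {y. \<forall>j\<in>{..<k}. G j y = 0}"
          using elim(2) by blast
        then have "Y \<inter> ball z \<rho> \<inter> {x + v |v. v \<in> tangent_space X x} =
            ball z \<rho> \<inter> {y. (\<forall>j\<in>{..<k}. G j y = 0) \<and> (\<forall>i\<in>{..<m}. gF i x \<bullet> (y - x) = 0)}"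
          unfolding translate_Collect_eq tangent by blast
        then show "\<exists>y. Y \<inter> ball z \<rho> \<inter> {x + v |v. v \<in> tangent_space X x} = {y} \<and>
            norm (y - z) \<le> C * (norm (x - z))\<^sup>2"
          using elim(1) x Fx by simp
      qed
    qed
  qed
qed

theorem theorem3p1:
  fixes X Y :: "'a::euclidean_space set" and z :: 'a
  assumes "z \<in> X \<inter> Y"
    and "C2_manifold_around X z" and "C2_manifold_around Y z"
    and "z isolated_in (X \<inter> Y)"
    and "normal_space X z \<inter> normal_space Y z = {0}"
  shows "\<exists>W. open W \<and> z \<in> W \<and>
           (\<forall>x\<in>X \<inter> W. \<exists>!y. y \<in> Y \<inter> W \<and> y \<in> {x + v | v. v \<in> tangent_space X x}) \<and>
           (\<exists>C \<delta>. \<delta> > 0 \<and> (\<forall>x y. x \<in> X \<inter> W \<and> y \<in> Y \<inter> W \<and>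
                 y \<in> {x + v | v. v \<in> tangent_space X x} \<and> norm (x - z) < \<delta> \<longrightarrow>
                 norm (y - z) \<le> C * (norm (x - z))\<^sup>2))"
proof -
  obtain m F gF where X: "C2_chart X z m F gF"
    using C2_manifold_chart[OF assms(2)] by blast
  obtain k G gG where Y: "C2_chart Y z k G gG"
    using C2_manifold_chart[OF assms(3)] by blast
  obtain C where "\<forall>\<^sub>F \<rho> in at_right 0. \<forall>x\<in>X \<inter> ball z \<rho>.
      \<exists>y. Y \<inter> ball z \<rho> \<inter> {x + v |v. v \<in> tangent_space X x} = {y} \<and> norm (y - z) \<le> C * (norm (x - z))\<^sup>2"
    by (rule C2_charts_tangent_section[OF X Y assms(1,4,5)])
  then obtain \<rho> where "\<rho> > 0" and section_at: "\<forall>x\<in>X \<inter> ball z \<rho>.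
      \<exists>y. Y \<inter> ball z \<rho> \<inter> {x + v |v. v \<in> tangent_space X x} = {y} \<and> norm (y - z) \<le> C * (norm (x - z))\<^sup>2"
    using eventually_happens'[OF trivial_limit_at_right_real eventually_conj[OF eventually_at_right_less]]
    by blast
  have sections: "(\<exists>!y. y \<in> Y \<inter> ball z \<rho> \<and> y \<in> {x + v |v. v \<in> tangent_space X x}) \<and>
      (\<forall>y. y \<in> Y \<inter> ball z \<rho> \<and> y \<in> {x + v |v. v \<in> tangent_space X x} \<longrightarrow>
        norm (y - z) \<le> C * (norm (x - z))\<^sup>2)" if x: "x \<in> X \<inter> ball z \<rho>" for x
  proof -
    obtain y where "Y \<inter> ball z \<rho> \<inter> {x + v |v. v \<in> tangent_space X x} = {y} \<and>
        norm (y - z) \<le> C * (norm (x - z))\<^sup>2"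
      using bspec[OF section_at x] ..
    then show ?thesis
      by (simp add: set_eq_iff)
  qed
  have "\<exists>C \<delta>. \<delta> > 0 \<and> (\<forall>x y. x \<in> X \<inter> ball z \<rho> \<and> y \<in> Y \<inter> ball z \<rho> \<and>
      y \<in> {x + v |v. v \<in> tangent_space X x} \<and> norm (x - z) < \<delta> \<longrightarrow> norm (y - z) \<le> C * (norm (x - z))\<^sup>2)"
    by (rule exI[of _ C], rule exI[of _ \<rho>]) (use \<open>\<rho> > 0\<close> sections in blast)
  then show ?thesis
    using \<open>\<rho> > 0\<close> sections by (intro exI[of _ "ball z \<rho>"]) simp
qed

end
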